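(* Let $\Omega\subset\mathbb{R}^N$ be a domain (an open, connected set) and let $r>0$. Then $\Omega$ satisfies the two-sided supporting $r$-sphere condition $(\mathrm{S}_r)$ if and only if it satisfies the $1/r$-Lipschitz normal condition $(\mathrm{L}_r)$.
   Context: $B_r(a)$ denotes the open Euclidean ball of radius $r$ centered at $a$; $\bar\Omega$ is the closure and $\partial\Omega$ the boundary of $\Omega$. Condition $(\mathrm{S}_r)$: for every $x_0\in\partial\Omega$ there exist $a,b\in\mathbb{R}^N$ such that $B_r(a)\subset\Omega$, $B_r(b)\subset\mathbb{R}^N\setminus\bar\Omega$ and $|x_0-a|=|x_0-b|=r$. $C^1$ regularity of $\partial\Omega$: for every $x_0\in\partial\Omega$ there exist $\rho,h>0$, a rigid map $T(x)=Ax+c$ ($A\in SO(N)$, $c\in\mathbb{R}^N$) with $T(x_0)=0$, and a $C^1$ function $\phi:\bar B_\rho(0)\subset\mathbb{R}^{N-1}\to(-h,h)$ with $\phi(0)=0$, $\nabla\phi(0)=0$, such that for the cylinder $\mathcal{C}=B_\rho(0)\times(-h,h)$ one has $\mathcal{C}\cap T(\Omega)=\{(x',x_N)\in\mathcal{C}: x_N<\phi(x')\}$ and $\mathcal{C}\cap T(\partial\Omega)=\{(x',x_N)\in\mathcal{C}: x_N=\phi(x')\}$. Under this condition the outward unit normal $\vec n:\partial\Omega\to\mathbb{R}^N$ is well defined (in local coordinates with $T=\mathrm{id}$, $\vec n(x',\phi(x'))=(-\nabla\phi(x'),1)/\sqrt{|\nabla\phi(x')|^2+1}$). Condition $(\mathrm{L}_r)$: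 $\partial\Omega$ is $C^1$ regular and $|\vec n(x_0)-\vec n(y_0)|\le \frac1r|x_0-y_0|$ for all $x_0,y_0\in\partial\Omega$. *)

theory Defs
  imports "HOL-Analysis.Analysis"
begin

text \<open>Euclidean space R^N is modelled as real^('m option) with N = CARD('m) + 1:
  the coordinate None plays the role of x_N and the coordinates Some i form x' in R^(N-1)
  (modelled as real^'m).\<close>

definition tangential :: "real^('m::finite option) \<Rightarrow> real^'m" where
  "tangential x = (\<chi> i. x $ Some i)"

definition vertical :: "real^('m::finite option) \<Rightarrow> real" where
  "vertical x = x $ None"

definition join :: "real^'m::finite \<Rightarrow> real \<Rightarrow> real^('m option)" where
  "join x' t = (\<chi> j. case j of None \<Rightarrow> t | Some i \<Rightarrow> x' $ i)"

definition cond_S :: "real \<Rightarrow> (real^('m::finite option)) set \<Rightarrow> bool" where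
  "cond_S r \<Omega> \<longleftrightarrow> (\<forall>x0\<in>frontier \<Omega>. \<exists>a b.
      ball a r \<subseteq> \<Omega> \<and> ball b r \<subseteq> - closure \<Omega> \<and> dist x0 a = r \<and> dist x0 b = r)"

definition C1_chart ::
  "(real^('m::finite option)) set \<Rightarrow> real^('m option) \<Rightarrow> real \<Rightarrow> real
   \<Rightarrow> real^('m option)^('m option) \<Rightarrow> real^('m option)
   \<Rightarrow> (real^'m \<Rightarrow> real) \<Rightarrow> (real^'m \<Rightarrow> real^'m) \<Rightarrow> bool" where
  "C1_chart \<Omega> x0 \<rho> h A c \<phi> g \<longleftrightarrow>
     \<rho> > 0 \<and> h > 0 \<and> orthogonal_matrix A \<and> det A = 1 \<and> A *v x0 + c = 0 \<and>
     (\<forall>y\<in>cball 0 \<rho>. \<phi> y \<in> {-h<..<h}) \<and> \<phi> 0 = 0 \<and> g 0 = 0 \<and>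
     continuous_on (cball 0 \<rho>) g \<and>
     (\<forall>y\<in>cball 0 \<rho>. (\<phi> has_derivative (\<lambda>v. g y \<bullet> v)) (at y within cball 0 \<rho>)) \<and>
     (let T = (\<lambda>x. A *v x + c);
          C = {x. norm (tangential x) < \<rho> \<and> \<bar>vertical x\<bar> < h} in
       C \<inter> T ` \<Omega> = {x\<in>C. vertical x < \<phi> (tangential x)} \<and>
       C \<inter> T ` frontier \<Omega> = {x\<in>C. vertical x = \<phi> (tangential x)})"

definition C1_boundary :: "(real^('m::finite option)) set \<Rightarrow> bool" where
  "C1_boundary \<Omega> \<longleftrightarrow> (\<forall>x0\<in>frontier \<Omega>. \<exists>\<rho> h A c \<phi> g. C1_chart \<Omega> x0 \<rho> h A c \<phi> g)"

definition outward_normal ::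
  "(real^('m::finite option)) set \<Rightarrow> (real^('m option) \<Rightarrow> real^('m option)) \<Rightarrow> bool" where
  "outward_normal \<Omega> n \<longleftrightarrow> (\<forall>x0\<in>frontier \<Omega>. \<exists>\<rho> h A c \<phi> g. C1_chart \<Omega> x0 \<rho> h A c \<phi> g \<and>
     (\<forall>y\<in>ball 0 \<rho>.
        n (matrix_inv A *v (join y (\<phi> y) - c)) =
          matrix_inv A *v ((1 / sqrt ((norm (g y))\<^sup>2 + 1)) *\<^sub>R join (- g y) 1)))"

definition cond_L :: "real \<Rightarrow> (real^('m::finite option)) set \<Rightarrow> bool" where
  "cond_L r \<Omega> \<longleftrightarrow> C1_boundary \<Omega> \<and> (\<exists>n. outward_normal \<Omega> n \<and>
     (\<forall>x0\<in>frontier \<Omega>. \<forall>y0\<in>frontier \<Omega>. norm (n x0 - n y0) \<le> (1 / r) * norm (x0 - y0)))"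

end

theory Submission
  imports Defs
begin

text \<open>
  \<open>(S\<^sub>r) \<Longrightarrow> (L\<^sub>r)\<close>: the two supporting balls at a boundary point \<open>x\<close> are tangent to each
  other at \<open>x\<close>, so their centres are \<open>x \<mp> r n(x)\<close> for a unit vector \<open>n(x)\<close>. The inner ball at
  \<open>x\<close> and the outer ball at \<open>y\<close> are disjoint, and the parallelogram law turns this into
  \<open>|n(x) - n(y)| \<le> |x - y|/r\<close>. After a rigid motion taking \<open>x\<^sub>0\<close> to \<open>0\<close> and \<open>n(x\<^sub>0)\<close> to
  \<open>e\<^sub>N\<close>, the balls force every vertical line near \<open>0\<close> to cross \<open>\<partial>\<Omega>\<close> exactly once, at
  height \<open>\<phi>(x')\<close>, and squeeze \<open>\<partial>\<Omega>\<close> between two paraboloids at each of its points; hence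
  \<open>\<phi>\<close> is differentiable with gradient \<open>-n'/n\<^sub>N\<close>, which is Lipschitz.

  \<open>(L\<^sub>r) \<Longrightarrow> (S\<^sub>r)\<close>: in a chart at \<open>x\<^sub>0\<close> the Lipschitz bound on the normal gives
  \<open>|\<phi>(z)| \<le> (1 + \<epsilon>)|z|\<^sup>2/(2r)\<close> near \<open>0\<close>, so near \<open>x\<^sub>0\<close> the boundary avoids every ball of radius
  \<open>s < r\<close> tangent to it at \<open>x\<^sub>0\<close>. If such a ball met \<open>\<partial>\<Omega>\<close> at all, the largest smaller tangent
  ball missing \<open>\<partial>\<Omega>\<close>, of radius \<open>s\<^sub>1 < r\<close>, would touch \<open>\<partial>\<Omega>\<close> at a second point \<open>y\<close>; there
  its centre determines \<open>n(y)\<close>, and \<open>|n(x\<^sub>0) - n(y)| = |x\<^sub>0 - y|/s\<^sub>1 > |x\<^sub>0 - y|/r\<close>. So all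
  tangent balls of radius \<open>< r\<close> miss \<open>\<partial>\<Omega>\<close>, and they lie in \<open>\<Omega>\<close> (resp. outside
  \<open>closure \<Omega>\<close>) because the inner (resp. outer) normal segment does.
\<close>

lemma tangential_join [simp]: "tangential (join y t) = y"
  by (simp add: tangential_def join_def)

lemma vertical_join [simp]: "vertical (join y t) = t"
  by (simp add: vertical_def join_def)

lemma join_tangential_vertical [simp]: "join (tangential x) (vertical x) = x"
  by (simp add: vec_eq_iff tangential_def vertical_def join_def split: option.split)

lemma join_eq_iff: "join y t = x \<longleftrightarrow> y = tangential x \<and> t = vertical x"
  by (metis join_tangential_vertical tangential_join vertical_join)

lemma eq_join_iff: "x = join y t \<longleftrightarrow> tangential x = y \<and> vertical x = t"
  by (metis join_tangential_vertical tangential_join vertical_join)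

lemma tangential_add [simp]: "tangential (x + y) = tangential x + tangential y"
  and tangential_diff [simp]: "tangential (x - y) = tangential x - tangential y"
  and tangential_minus [simp]: "tangential (- x) = - tangential x"
  and tangential_scaleR [simp]: "tangential (c *\<^sub>R x) = c *\<^sub>R tangential x"
  and tangential_zero [simp]: "tangential 0 = 0"
  by (simp_all add: tangential_def vec_eq_iff)

lemma vertical_add [simp]: "vertical (x + y) = vertical x + vertical y"
  and vertical_diff [simp]: "vertical (x - y) = vertical x - vertical y"
  and vertical_minus [simp]: "vertical (- x) = - vertical x"
  and vertical_scaleR [simp]: "vertical (c *\<^sub>R x) = c * vertical x"
  and vertical_zero [simp]: "vertical 0 = 0"
  by (simp_all add: vertical_def)

lemma join_zero [simp]: "join 0 0 = 0"
  by (simp add: join_eq_iff)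

lemma join_diff: "join y1 t1 - join y2 t2 = join (y1 - y2) (t1 - t2)"
  by (simp add: eq_join_iff)

lemma join_add: "join y1 t1 + join y2 t2 = join (y1 + y2) (t1 + t2)"
  by (simp add: eq_join_iff)

lemma join_scaleR: "c *\<^sub>R join y t = join (c *\<^sub>R y) (c * t)"
  by (simp add: eq_join_iff)

lemma inner_tangential_vertical: "x \<bullet> y = tangential x \<bullet> tangential y + vertical x * vertical y"
proof -
  have "x \<bullet> y = x $ None * y $ None + (\<Sum>i\<in>range Some. x $ i * y $ i)"
    by (simp add: inner_vec_def UNIV_option_conv)
  also have "(\<Sum>i\<in>range Some. x $ i * y $ i) = (\<Sum>j\<in>UNIV. x $ Some j * y $ Some j)"
    by (subst sum.reindex) auto
  finally show ?thesis
    by (simp add: inner_vec_def tangential_def vertical_def)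
qed

lemma inner_join: "join y t \<bullet> x = y \<bullet> tangential x + t * vertical x"
  by (simp add: inner_tangential_vertical)

lemma norm_tangential_vertical: "(norm x)\<^sup>2 = (norm (tangential x))\<^sup>2 + (vertical x)\<^sup>2"
  by (metis inner_tangential_vertical power2_norm_eq_inner power2_eq_square)

lemma norm_join: "(norm (join y t))\<^sup>2 = (norm y)\<^sup>2 + t\<^sup>2"
  using norm_tangential_vertical[of "join y t"] by simp

lemma norm_join_0_1 [simp]: "norm (join (0::real^'a::finite) 1) = 1"
proof -
  have "(norm (join (0::real^'a) 1))\<^sup>2 = 1\<^sup>2" using norm_join[of "0::real^'a" 1] by simp
  then show ?thesis by (rule power2_eq_imp_eq) simp_all
qed

lemma norm_tangential_le: "norm (tangential x) \<le> norm x"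
proof -
  have "(norm (tangential x))\<^sup>2 \<le> (norm x)\<^sup>2" using norm_tangential_vertical[of x] by simp
  then show ?thesis by (rule power2_le_imp_le) simp
qed

lemma abs_vertical_le: "\<bar>vertical x\<bar> \<le> norm x"
proof -
  have "\<bar>vertical x\<bar>\<^sup>2 \<le> (norm x)\<^sup>2" using norm_tangential_vertical[of x] by simp
  then show ?thesis by (rule power2_le_imp_le) simp
qed

lemma norm_join_le: "norm (join y t) \<le> norm y + \<bar>t\<bar>"
proof -
  have "(norm (join y t))\<^sup>2 \<le> (norm y + \<bar>t\<bar>)\<^sup>2"
    unfolding norm_join by (simp add: power2_eq_square algebra_simps)
  then show ?thesis by (rule power2_le_imp_le) simp
qed

lemma bounded_linear_tangential: "bounded_linear tangential"
  by (rule bounded_linear_intro[where K=1]) (auto simp: norm_tangential_le)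

lemma bounded_linear_vertical: "bounded_linear vertical"
  by (rule bounded_linear_intro[where K=1]) (auto simp: abs_vertical_le)

lemma card_option_ge_2: "2 \<le> CARD('m::finite option)"
  by (simp add: UNIV_option_conv card_insert_disjoint card_image finite_UNIV_card_ge_0 Suc_le_eq)


lemma orthogonal_matrix_inv_eq_transpose:
  fixes A :: "real^'n^'n"
  assumes "orthogonal_matrix A"
  shows "matrix_inv A = transpose A"
proof -
  have "\<exists>A'. A ** A' = mat 1 \<and> A' ** A = mat 1"
    using assms by (auto simp: orthogonal_matrix_def)
  then have inv: "A ** matrix_inv A = mat 1 \<and> matrix_inv A ** A = mat 1"
    unfolding matrix_inv_def by (rule someI_ex)
  have "matrix_inv A = matrix_inv A ** (A ** transpose A)"
    using assms by (simp add: orthogonal_matrix_def)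
  also have "\<dots> = (matrix_inv A ** A) ** transpose A"
    by (simp add: matrix_mul_assoc)
  finally show ?thesis
    using inv by simp
qed

lemma isometry_image_closure:
  fixes f :: "'a::metric_space \<Rightarrow> 'b::metric_space"
  assumes iso: "\<And>x y. dist (f x) (f y) = dist x y" and "surj f"
  shows "closure (f ` S) = f ` closure S"
proof -
  have mem: "f x \<in> closure (f ` S) \<longleftrightarrow> x \<in> closure S" for x
    unfolding closure_approachable by (simp add: iso)
  show ?thesis
  proof
    show "closure (f ` S) \<subseteq> f ` closure S"
      using mem \<open>surj f\<close> by (metis image_eqI subsetI surjD)
    show "f ` closure S \<subseteq> closure (f ` S)"
      using mem by blast
  qed
qed

lemma isometry_image_frontier:
  fixes f :: "'a::metric_space \<Rightarrow> 'b::metric_space"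
  assumes iso: "\<And>x y. dist (f x) (f y) = dist x y" and "surj f"
  shows "frontier (f ` S) = f ` frontier S"
proof -
  have "inj f" by (rule injI) (metis iso dist_eq_0_iff)
  then have "- (f ` S) = f ` (- S)"
    using \<open>surj f\<close> by (simp add: bij_betw_def bij_image_Compl_eq)
  then show ?thesis
    using \<open>inj f\<close> by (simp add: frontier_closures isometry_image_closure[OF assms] image_Int)
qed

locale rigid_motion =
  fixes A :: "real^'n^'n" and c :: "real^'n"
  assumes orthogonal_A: "orthogonal_matrix A"
begin

definition T :: "real^'n \<Rightarrow> real^'n" where "T x = A *v x + c"

definition Ti :: "real^'n \<Rightarrow> real^'n" where "Ti q = transpose A *v (q - c)"

lemma transpose_A_A [simp]: "transpose A *v (A *v x) = x"
  and A_transpose_A [simp]: "A *v (transpose A *v x) = x"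
  using orthogonal_A by (metis matrix_vector_mul_assoc matrix_vector_mul_lid orthogonal_matrix_def)+

lemma orthogonal_transformation_A: "orthogonal_transformation ((*v) A)"
  and orthogonal_transformation_transpose_A: "orthogonal_transformation ((*v) (transpose A))"
  by (simp_all add: orthogonal_transformation_matrix matrix_vector_mul_linear orthogonal_A)

lemma norm_A [simp]: "norm (A *v x) = norm x"
  and norm_transpose_A [simp]: "norm (transpose A *v x) = norm x"
  using orthogonal_transformation_A orthogonal_transformation_transpose_A orthogonal_transformation
  by blast+

lemma inner_A [simp]: "(A *v x) \<bullet> (A *v y) = x \<bullet> y"
  using orthogonal_transformation_A orthogonal_transformation_def by blast

lemma T_Ti [simp]: "T (Ti q) = q"
  unfolding T_def Ti_def A_transpose_A by simp

lemma Ti_T [simp]: "Ti (T x) = x"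
  unfolding T_def Ti_def by (simp only: add_diff_cancel_right' transpose_A_A)

lemma T_eq_iff [simp]: "T x = T y \<longleftrightarrow> x = y"
  by (metis Ti_T)

lemma T_diff: "T p - T q = A *v (p - q)"
  by (simp add: T_def matrix_vector_mult_diff_distrib)

lemma Ti_diff: "Ti p - Ti q = transpose A *v (p - q)"
  by (simp add: Ti_def matrix_vector_mult_diff_distrib)

lemma T_add_scaleR: "T (x + s *\<^sub>R v) = T x + s *\<^sub>R (A *v v)"
  by (simp add: T_def matrix_vector_right_distrib matrix_vector_mult_scaleR algebra_simps)

lemma dist_T [simp]: "dist (T x) (T y) = dist x y"
  by (simp add: dist_norm T_diff)

lemma surj_T: "surj T"
  by (metis T_Ti surjI)

lemma mem_image_T_iff: "q \<in> T ` S \<longleftrightarrow> Ti q \<in> S"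
  by (metis T_Ti Ti_T imageE imageI)

lemma T_mem_image_iff [simp]: "T x \<in> T ` S \<longleftrightarrow> x \<in> S"
  by (simp add: mem_image_T_iff)

lemma norm_A_diff: "norm (A *v x - A *v y) = norm (x - y)"
  by (simp only: matrix_vector_mult_diff_distrib[symmetric] norm_A)

lemma norm_Ti_diff: "norm (Ti p - Ti q) = norm (p - q)"
  by (simp only: Ti_diff norm_transpose_A)

lemma image_T_ball: "T ` ball a s = ball (T a) s"
proof -
  have "dist (T a) q = dist a (Ti q)" for q
    using dist_T[of a "Ti q"] by simp
  then show ?thesis by (auto simp: mem_image_T_iff)
qed

lemma closure_image_T: "closure (T ` S) = T ` closure S"
  by (rule isometry_image_closure[OF dist_T surj_T])

lemma frontier_image_T: "frontier (T ` S) = T ` frontier S"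
  by (rule isometry_image_frontier[OF dist_T surj_T])

lemma open_image_T: "open S \<Longrightarrow> open (T ` S)"
proof -
  assume "open S"
  have "T ` S = Ti -` S" by (auto simp: mem_image_T_iff)
  moreover have "continuous_on UNIV ((*v) (transpose A) \<circ> (\<lambda>q. q - c))"
    by (intro continuous_on_compose continuous_intros linear_continuous_on
        matrix_vector_mul_bounded_linear)
  moreover have "(*v) (transpose A) \<circ> (\<lambda>q. q - c) = Ti"
    unfolding Ti_def comp_def ..
  ultimately show ?thesis
    using \<open>open S\<close> by (simp add: continuous_on_open_vimage)
qed

end

lemma parallelogram_law:
  fixes p q :: "'a::real_inner"
  shows "(norm (p + q))\<^sup>2 + (norm (p - q))\<^sup>2 = 2 * (norm p)\<^sup>2 + 2 * (norm q)\<^sup>2"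
  by (simp add: power2_norm_eq_inner inner_add_left inner_add_right inner_diff_left
      inner_diff_right inner_commute algebra_simps)

lemma norm_add_scaleR_unit_square:
  fixes w v :: "'a::real_inner"
  assumes "norm v = 1"
  shows "(norm (w + s *\<^sub>R v))\<^sup>2 = (norm w)\<^sup>2 + 2 * s * (w \<bullet> v) + s\<^sup>2"
proof -
  have "(norm (w + s *\<^sub>R v))\<^sup>2 = (w + s *\<^sub>R v) \<bullet> (w + s *\<^sub>R v)"
    by (simp only: power2_norm_eq_inner)
  also have "\<dots> = w \<bullet> w + 2 * s * (w \<bullet> v) + s\<^sup>2 * (v \<bullet> v)"
    by (simp add: inner_add_left inner_add_right inner_commute power2_eq_square algebra_simps)
  finally show ?thesis
    using assms by (simp add: power2_norm_eq_inner[symmetric])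
qed

lemma mem_ball_iff_norm: "x \<in> ball c s \<longleftrightarrow> norm (x - c) < s"
  by (simp add: dist_norm norm_minus_commute)

lemma mem_tangent_ball_iff:
  fixes p x0 v :: "'a::real_inner"
  assumes "norm v = 1" "s > 0"
  shows "p \<in> ball (x0 + s *\<^sub>R v) s \<longleftrightarrow> (norm (p - x0))\<^sup>2 < 2 * s * ((p - x0) \<bullet> v)"
proof -
  have "p \<in> ball (x0 + s *\<^sub>R v) s \<longleftrightarrow> norm ((p - x0) + (- s) *\<^sub>R v) < s"
    by (simp add: dist_norm norm_minus_commute diff_diff_eq)
  also have "\<dots> \<longleftrightarrow> (norm ((p - x0) + (- s) *\<^sub>R v))\<^sup>2 < s\<^sup>2"
    using assms(2) power2_less_imp_less[of _ s] power_strict_mono[of _ s 2] by auto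
  finally show ?thesis
    unfolding norm_add_scaleR_unit_square[OF assms(1)] by simp
qed

lemma centres_far_if_balls_separated:
  fixes a b :: "'a::real_normed_vector"
  assumes "ball a r \<subseteq> S" "ball b r \<subseteq> - closure S"
  shows "2 * r \<le> dist a b"
proof (rule ccontr)
  assume "\<not> 2 * r \<le> dist a b"
  define m where "m = midpoint a b"
  have "m \<in> ball a r" "m \<in> ball b r"
    using \<open>\<not> 2 * r \<le> dist a b\<close> by (simp_all add: m_def dist_midpoint)
  then show False using assms closure_subset by blast
qed

lemma antipodal_if_far:
  fixes a b x :: "'a::real_inner"
  assumes "dist x a = r" "dist x b = r" "2 * r \<le> dist a b"
  shows "b = 2 *\<^sub>R x - a"
proof -
  define u where "u = a - x"
  define v where "v = x - b"
  have norms: "norm u = r" "norm v = r"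
    using assms by (simp_all add: u_def v_def dist_norm norm_minus_commute)
  have "(2 * r)\<^sup>2 \<le> (norm (u + v))\<^sup>2"
    using assms norms by (intro power_mono) (auto simp: u_def v_def dist_norm)
  then have "(norm (u - v))\<^sup>2 \<le> 0"
    using parallelogram_law[of u v] norms by (simp add: power2_eq_square)
  then have "u = v" by simp
  then show ?thesis by (simp add: u_def v_def algebra_simps scaleR_2)
qed

lemma normal_difference_le_if_balls_separated:
  fixes x y nx ny :: "'a::real_inner"
  assumes r: "r > 0" and n: "norm nx = 1" "norm ny = 1"
    and far1: "2 * r \<le> norm ((x - r *\<^sub>R nx) - (y + r *\<^sub>R ny))"
    and far2: "2 * r \<le> norm ((y - r *\<^sub>R ny) - (x + r *\<^sub>R nx))"
  shows "norm (nx - ny) \<le> norm (x - y) / r"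
proof -
  define d where "d = x - y"
  define s where "s = nx + ny"
  have "(2 * r)\<^sup>2 \<le> (norm (d - r *\<^sub>R s))\<^sup>2"
    using far1 r by (intro power_mono) (auto simp: d_def s_def algebra_simps)
  moreover have "(2 * r)\<^sup>2 \<le> (norm (d + r *\<^sub>R s))\<^sup>2"
    using far2 r by (intro power_mono) (auto simp: d_def s_def algebra_simps norm_minus_commute)
  moreover have "(norm (d + r *\<^sub>R s))\<^sup>2 + (norm (d - r *\<^sub>R s))\<^sup>2 = 2 * (norm d)\<^sup>2 + 2 * r\<^sup>2 * (norm s)\<^sup>2"
    using parallelogram_law[of d "r *\<^sub>R s"] r by (simp add: power_mult_distrib)
  moreover have "(norm s)\<^sup>2 + (norm (nx - ny))\<^sup>2 = 4"
    using parallelogram_law[of nx ny] n by (simp add: s_def)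
  then have "r\<^sup>2 * (norm (nx - ny))\<^sup>2 = r\<^sup>2 * 4 - r\<^sup>2 * (norm s)\<^sup>2"
    by (simp add: right_diff_distrib[symmetric])
  moreover have "(2 * r)\<^sup>2 = 4 * r\<^sup>2" by (simp add: power2_eq_square)
  ultimately have "r\<^sup>2 * (norm (nx - ny))\<^sup>2 \<le> (norm d)\<^sup>2"
    by linarith
  then have "(r * norm (nx - ny))\<^sup>2 \<le> (norm d)\<^sup>2"
    by (simp add: power_mult_distrib)
  then have "r * norm (nx - ny) \<le> norm d" by (rule power2_le_imp_le) simp
  then show ?thesis using r by (simp add: d_def field_simps)
qed


section \<open>From supporting balls to a Lipschitz normal\<close>

lemma frontier_subset_closure: "frontier S \<subseteq> closure S"
  by (simp add: frontier_def)

locale two_sided_balls =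
  fixes U :: "'a::real_inner set" and r :: real and \<nu> :: "'a \<Rightarrow> 'a"
  assumes open_U: "open U" and r_pos: "r > 0"
    and inner_ball: "q \<in> frontier U \<Longrightarrow> ball (q - r *\<^sub>R \<nu> q) r \<subseteq> U"
    and outer_ball: "q \<in> frontier U \<Longrightarrow> ball (q + r *\<^sub>R \<nu> q) r \<subseteq> - closure U"
    and norm_normal: "q \<in> frontier U \<Longrightarrow> norm (\<nu> q) = 1"
begin

lemma normal_lipschitz:
  assumes "p \<in> frontier U" "q \<in> frontier U"
  shows "norm (\<nu> p - \<nu> q) \<le> norm (p - q) / r"
proof (rule normal_difference_le_if_balls_separated[OF r_pos norm_normal norm_normal])
  show "2 * r \<le> norm (p - r *\<^sub>R \<nu> p - (q + r *\<^sub>R \<nu> q))"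
    using centres_far_if_balls_separated[OF inner_ball outer_ball] assms by (simp add: dist_norm)
  show "2 * r \<le> norm (q - r *\<^sub>R \<nu> q - (p + r *\<^sub>R \<nu> p))"
    using centres_far_if_balls_separated[OF inner_ball outer_ball] assms by (simp add: dist_norm)
qed (use assms in auto)

lemma frontier_disjoint: "frontier U \<inter> U = {}"
  using open_U by (auto simp: frontier_def interior_open)

lemma inner_ball_disjoint_frontier: "q \<in> frontier U \<Longrightarrow> ball (q - r *\<^sub>R \<nu> q) r \<inter> frontier U = {}"
  using inner_ball frontier_disjoint by blast

lemma outer_ball_disjoint_frontier: "q \<in> frontier U \<Longrightarrow> ball (q + r *\<^sub>R \<nu> q) r \<inter> closure U = {}"
  using outer_ball by blast

text \<open>The boundary lies between the two supporting spheres, hence close to the tangent plane.\<close>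

lemma frontier_near_tangent_plane:
  assumes p: "p \<in> frontier U" and q: "q \<in> frontier U"
  shows "2 * r * \<bar>(p - q) \<bullet> \<nu> q\<bar> \<le> (norm (p - q))\<^sup>2"
proof -
  have "r \<le> norm ((p - q) + s *\<^sub>R \<nu> q)" if "s = r \<or> s = - r" for s
  proof -
    have "p \<notin> ball (q - s *\<^sub>R \<nu> q) r"
      using that inner_ball_disjoint_frontier[OF q] outer_ball_disjoint_frontier[OF q] p
        by (auto simp: frontier_def)
    then show ?thesis by (simp add: dist_norm algebra_simps norm_minus_commute)
  qed
  then have "r\<^sup>2 \<le> (norm ((p - q) + s *\<^sub>R \<nu> q))\<^sup>2" if "s = r \<or> s = - r" for s
    using r_pos that by (intro power_mono) auto
  then have "0 \<le> (norm (p - q))\<^sup>2 + 2 * s * ((p - q) \<bullet> \<nu> q)" if "s = r \<or> s = - r" for s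
    using that norm_add_scaleR_unit_square[OF norm_normal[OF q], of "p - q"] by force
  from this[of r] this[of "- r"] show ?thesis
    by (cases "(p - q) \<bullet> \<nu> q \<ge> 0") (auto simp: abs_if)
qed

end

lemma cond_S_imp_two_sided_balls:
  assumes "open \<Omega>" "r > 0" "cond_S r \<Omega>"
  shows "\<exists>\<nu>. two_sided_balls \<Omega> r \<nu>"
proof -
  obtain a b where ab: "\<And>x. x \<in> frontier \<Omega> \<Longrightarrow> ball (a x) r \<subseteq> \<Omega> \<and> ball (b x) r \<subseteq> - closure \<Omega> \<and>
      dist x (a x) = r \<and> dist x (b x) = r"
    using \<open>cond_S r \<Omega>\<close> unfolding cond_S_def by metis
  define \<nu> where "\<nu> x = (1/r) *\<^sub>R (x - a x)" for x
  have a: "a x = x - r *\<^sub>R \<nu> x" for x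
    using \<open>r > 0\<close> by (simp add: \<nu>_def)
  have b: "b x = x + r *\<^sub>R \<nu> x" if "x \<in> frontier \<Omega>" for x
  proof -
    have "b x = 2 *\<^sub>R x - a x"
      using ab[OF that] centres_far_if_balls_separated[of "a x" r \<Omega> "b x"] by (intro antipodal_if_far) auto
    then show ?thesis by (simp add: a algebra_simps scaleR_2)
  qed
  have "two_sided_balls \<Omega> r \<nu>"
    using assms ab by unfold_locales (auto simp: b simp flip: a simp: \<nu>_def dist_norm)
  then show ?thesis by blast
qed

lemma (in rigid_motion) two_sided_balls_image:
  assumes "two_sided_balls U r \<nu>"
  shows "two_sided_balls (T ` U) r (\<lambda>q. A *v \<nu> (Ti q))"
proof -
  interpret two_sided_balls U r \<nu> by (fact assms)
  have frontier: "q \<in> frontier (T ` U) \<longleftrightarrow> Ti q \<in> frontier U" for q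
    by (simp add: frontier_image_T mem_image_T_iff)
  have centre: "q + s *\<^sub>R (A *v \<nu> (Ti q)) = T (Ti q + s *\<^sub>R \<nu> (Ti q))" for q s
    by (simp add: T_add_scaleR)
  show ?thesis
  proof
    show "open (T ` U)" by (rule open_image_T[OF open_U])
    fix q assume q: "q \<in> frontier (T ` U)"
    show "ball (q - r *\<^sub>R (A *v \<nu> (Ti q))) r \<subseteq> T ` U"
      using centre[of q "- r"] inner_ball[of "Ti q"] q
      by (simp add: frontier image_T_ball[symmetric] image_mono)
    show "ball (q + r *\<^sub>R (A *v \<nu> (Ti q))) r \<subseteq> - closure (T ` U)"
      using centre[of q r] outer_ball[of "Ti q"] q
      by (auto simp: frontier closure_image_T image_T_ball[symmetric] mem_image_T_iff)
    show "norm (A *v \<nu> (Ti q)) = 1"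
      using q norm_normal by (simp add: frontier)
  qed (rule r_pos)
qed


section \<open>The boundary as a graph in normalized position\<close>

lemma height_increment_le:
  fixes a D v k r :: real
  assumes "r > 0" "2 * r * \<bar>k + D * v\<bar> \<le> a\<^sup>2 + D\<^sup>2" "1/2 \<le> v" "v \<le> 1" "\<bar>k\<bar> \<le> a"
    "\<bar>D\<bar> \<le> r/2" "0 \<le> a" "a \<le> r/2"
  shows "\<bar>D\<bar> \<le> 5 * a"
proof -
  have "\<bar>D\<bar> * (1/2) \<le> \<bar>D\<bar> * v" using assms by (intro mult_left_mono) auto
  also have "\<bar>D\<bar> * v = \<bar>(k + D * v) - k\<bar>" using assms by (simp add: abs_mult)
  also have "\<dots> \<le> \<bar>k + D * v\<bar> + a" using assms by linarith
  finally have lower: "\<bar>D\<bar> * (1/2) \<le> \<bar>k + D * v\<bar> + a" .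
  have "\<bar>D\<bar> * \<bar>D\<bar> \<le> \<bar>D\<bar> * (r/2)" "a * a \<le> a * (r/2)"
    using assms by (intro mult_left_mono; simp)+
  then have "r * (2 * \<bar>k + D * v\<bar>) \<le> r * ((a + \<bar>D\<bar>) / 2)"
    using assms(2) by (simp add: power2_eq_square algebra_simps)
  then have "2 * \<bar>k + D * v\<bar> \<le> (a + \<bar>D\<bar>) / 2"
    using assms(1) by (rule mult_left_le_imp_le)
  moreover have "Y \<le> 5 * a" if "Y * (1/2) \<le> X + a" "2 * X \<le> (a + Y) / 2" for X Y :: real
    using that by argo
  ultimately show ?thesis using lower by blast
qed

lemma height_linearization_le:
  fixes a D v k r :: real
  assumes "r > 0" "2 * r * \<bar>k + D * v\<bar> \<le> a\<^sup>2 + D\<^sup>2" "1/2 \<le> v" "\<bar>D\<bar> \<le> 5 * a"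
  shows "\<bar>D + k / v\<bar> \<le> 26 * a\<^sup>2 / r"
proof -
  have v: "v > 0" using assms by simp
  have "D\<^sup>2 \<le> 25 * a\<^sup>2"
    using power_mono[OF assms(4) abs_ge_zero, of 2] by (simp add: power_mult_distrib)
  then have "r * \<bar>k + D * v\<bar> \<le> 13 * a\<^sup>2" using assms(2) by simp
  also have "\<dots> \<le> (2 * v) * (13 * a\<^sup>2)" using mult_right_mono[of 1 "2 * v" "13 * a\<^sup>2"] assms(3) by simp
  finally have "\<bar>k + D * v\<bar> / v \<le> 26 * a\<^sup>2 / r"
    using v assms(1) by (simp add: field_simps)
  moreover have "D + k / v = (k + D * v) / v" using v by (simp add: field_simps)
  ultimately show ?thesis using v by (simp add: abs_divide)
qed

lemma has_derivative_if_quadratic_error: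
  fixes f :: "'a::real_inner \<Rightarrow> real"
  assumes "C > 0" and err: "\<And>z. z \<in> S \<Longrightarrow> \<bar>f z - f y - g \<bullet> (z - y)\<bar> \<le> C * (norm (z - y))\<^sup>2"
  shows "(f has_derivative (\<lambda>v. g \<bullet> v)) (at y within S)"
  unfolding has_derivative_within_alt
proof (intro conjI allI impI bounded_linear_inner_right)
  fix e :: real assume "e > 0"
  show "\<exists>d>0. \<forall>z\<in>S. norm (z - y) < d \<longrightarrow> norm (f z - f y - g \<bullet> (z - y)) \<le> e * norm (z - y)"
  proof (intro exI[of _ "e / C"] conjI ballI impI)
    fix z assume "z \<in> S" "norm (z - y) < e / C"
    then have "C * norm (z - y) \<le> e"
      using \<open>C > 0\<close> by (simp add: field_simps)
    then have "C * norm (z - y) * norm (z - y) \<le> e * norm (z - y)"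
      by (rule mult_right_mono) simp
    then have "C * (norm (z - y))\<^sup>2 \<le> e * norm (z - y)"
      by (simp add: power2_eq_square mult.assoc)
    then show "norm (f z - f y - g \<bullet> (z - y)) \<le> e * norm (z - y)"
      using err[OF \<open>z \<in> S\<close>] by simp
  qed (use \<open>e > 0\<close> \<open>C > 0\<close> in simp)
qed

lemma norm_scaleR_minus_vertical_less:
  fixes v :: "real^('m::finite option)"
  assumes "norm v = 1" "1/2 \<le> vertical v" "0 < d" "d < r"
  shows "norm (r *\<^sub>R v - d *\<^sub>R join 0 1) < r"
proof -
  have "r * (1/2) \<le> r * vertical v" using assms by (intro mult_left_mono) auto
  then have "d < 2 * r * vertical v" using assms by linarith
  then have pos: "0 < d * (2 * r * vertical v - d)" using assms by simp
  have "(r *\<^sub>R v) \<bullet> join 0 1 = r * vertical v"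
    by (subst inner_commute) (simp add: inner_join)
  moreover have "(norm (r *\<^sub>R v))\<^sup>2 = r\<^sup>2"
    using assms(1) by (simp add: power_mult_distrib)
  ultimately have "(norm (r *\<^sub>R v + (- d) *\<^sub>R join 0 1))\<^sup>2 = r\<^sup>2 + 2 * (- d) * (r * vertical v) + (- d)\<^sup>2"
    by (simp only: norm_add_scaleR_unit_square[OF norm_join_0_1])
  then have "(norm (r *\<^sub>R v - d *\<^sub>R join 0 1))\<^sup>2 = r\<^sup>2 - d * (2 * r * vertical v - d)"
    by (simp add: power2_eq_square algebra_simps)
  with pos have "(norm (r *\<^sub>R v - d *\<^sub>R join 0 1))\<^sup>2 < r\<^sup>2" by linarith
  then show ?thesis by (rule power2_less_imp_less) (use assms in auto)
qed

locale normalized_two_sided_balls = two_sided_balls U r \<nu>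
  for U :: "(real^('m::finite option)) set" and r \<nu> +
  assumes zero_in_frontier: "0 \<in> frontier U" and normal_zero: "\<nu> 0 = join 0 1"
begin

lemma vertical_normal_ge:
  assumes "q \<in> frontier U" "norm q \<le> r/2"
  shows "1/2 \<le> vertical (\<nu> q)"
proof -
  have "\<bar>vertical (\<nu> q - \<nu> 0)\<bar> \<le> norm (q - 0) / r"
    using normal_lipschitz[OF assms(1) zero_in_frontier] abs_vertical_le order_trans by blast
  also have "\<dots> \<le> 1/2" using assms(2) r_pos by (simp add: field_simps)
  finally have "\<bar>vertical (\<nu> q) - 1\<bar> \<le> 1/2" by (simp add: normal_zero)
  then show ?thesis by (simp only: abs_le_iff) linarith
qed

lemma below_frontier_in:
  assumes "q \<in> frontier U" "norm q \<le> r/2" "0 < d" "d < r"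
  shows "q - d *\<^sub>R join 0 1 \<in> U"
proof -
  have "norm (r *\<^sub>R \<nu> q - d *\<^sub>R join 0 1) < r"
    using assms norm_normal vertical_normal_ge by (intro norm_scaleR_minus_vertical_less) auto
  then have "q - d *\<^sub>R join 0 1 \<in> ball (q - r *\<^sub>R \<nu> q) r"
    by (simp add: dist_norm algebra_simps norm_minus_commute)
  then show ?thesis using inner_ball[OF assms(1)] by blast
qed

lemma above_frontier_out:
  assumes "q \<in> frontier U" "norm q \<le> r/2" "0 < d" "d < r"
  shows "q + d *\<^sub>R join 0 1 \<notin> closure U"
proof -
  have "norm (r *\<^sub>R \<nu> q - d *\<^sub>R join 0 1) < r"
    using assms norm_normal vertical_normal_ge by (intro norm_scaleR_minus_vertical_less) auto
  then have "q + d *\<^sub>R join 0 1 \<in> ball (q + r *\<^sub>R \<nu> q) r"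
    by (simp add: dist_norm algebra_simps)
  then show ?thesis using outer_ball[OF assms(1)] by blast
qed

lemma norm_join_less:
  assumes "norm y \<le> r/4" "\<bar>s\<bar> \<le> 3 * r/4"
  shows "norm (join y s) < r"
proof -
  have "(norm y)\<^sup>2 \<le> (r/4)\<^sup>2" "s\<^sup>2 \<le> (3 * r/4)\<^sup>2"
    using assms r_pos by (auto intro: power_mono simp: abs_le_square_iff[symmetric])
  then have "(norm y)\<^sup>2 \<le> r\<^sup>2 / 16" "s\<^sup>2 \<le> 9 * r\<^sup>2 / 16"
    by (simp_all add: power_divide power_mult_distrib)
  moreover have "0 < r\<^sup>2" using r_pos by simp
  ultimately have "(norm (join y s))\<^sup>2 < r\<^sup>2"
    unfolding norm_join by linarith
  then show ?thesis by (rule power2_less_imp_less) (use r_pos in auto)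
qed

lemma vertical_line_crosses_frontier:
  assumes y: "norm y \<le> r/4"
  shows "\<exists>t. \<bar>t\<bar> < r/4 \<and> join y t \<in> frontier U"
proof -
  have "join y (- r/4) - (0 - r *\<^sub>R \<nu> 0) = join y (3 * r/4)"
    by (simp add: normal_zero eq_join_iff)
  then have "join y (- r/4) \<in> ball (0 - r *\<^sub>R \<nu> 0) r"
    using norm_join_less[OF y, of "3 * r/4"] r_pos unfolding mem_ball_iff_norm by simp
  then have bottom: "join y (- r/4) \<in> U" using inner_ball[OF zero_in_frontier] by blast
  have "join y (r/4) - (0 + r *\<^sub>R \<nu> 0) = join y (- (3 * r/4))"
    by (simp add: normal_zero eq_join_iff)
  then have "join y (r/4) \<in> ball (0 + r *\<^sub>R \<nu> 0) r"
    using norm_join_less[OF y, of "- (3 * r/4)"] r_pos unfolding mem_ball_iff_norm by simp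
  then have top: "join y (r/4) \<notin> closure U" using outer_ball[OF zero_in_frontier] by blast
  define L where "L t = join y 0 + t *\<^sub>R join 0 1" for t
  have L: "L t = join y t" for t by (simp add: L_def join_scaleR join_add)
  have "continuous_on {- r/4..r/4} L" unfolding L_def by (intro continuous_intros)
  then have conn: "connected (L ` {- r/4..r/4})" by (rule connected_continuous_image) simp
  have ends: "L (- r/4) \<in> L ` {- r/4..r/4}" "L (r/4) \<in> L ` {- r/4..r/4}"
    using r_pos by auto
  have "L ` {- r/4..r/4} \<inter> U \<noteq> {}" using ends(1) bottom by (auto simp: L)
  moreover have "L ` {- r/4..r/4} - U \<noteq> {}" using ends(2) top closure_subset by (auto simp: L)
  ultimately have "L ` {- r/4..r/4} \<inter> frontier U \<noteq> {}" by (rule connected_Int_frontier[OF conn])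
  then obtain t where t: "t \<in> {- r/4..r/4}" "L t \<in> frontier U" by blast
  then have "join y t \<in> frontier U" by (simp add: L)
  moreover have "t \<noteq> - r/4" "t \<noteq> r/4"
    using bottom top \<open>join y t \<in> frontier U\<close> frontier_disjoint frontier_subset_closure[of U] by auto
  ultimately show ?thesis using t(1) by (intro exI[of _ t]) auto
qed

lemma vertical_line_crosses_frontier_once:
  assumes "norm y \<le> r/4" "\<bar>t1\<bar> < r/4" "\<bar>t2\<bar> < r/4"
    and "join y t1 \<in> frontier U" "join y t2 \<in> frontier U"
  shows "t1 = t2"
proof -
  have not_less: "\<not> s1 < s2"
    if "\<bar>s1\<bar> < r/4" "\<bar>s2\<bar> < r/4" "join y s1 \<in> frontier U" "join y s2 \<in> frontier U" for s1 s2
  proof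
    assume "s1 < s2"
    have "norm (join y s1) \<le> r/2"
      using norm_join_le[of y s1] assms(1) that(1) by linarith
    then have "join y s1 + (s2 - s1) *\<^sub>R join 0 1 \<notin> closure U"
      using above_frontier_out[OF that(3)] \<open>s1 < s2\<close> that by simp
    then show False
      using that(4) frontier_subset_closure[of U] by (auto simp: join_scaleR join_add)
  qed
  show ?thesis
    using not_less[of t1 t2] not_less[of t2 t1] assms by linarith
qed

definition height :: "real^'m \<Rightarrow> real" where
  "height y = (THE t. \<bar>t\<bar> < r/4 \<and> join y t \<in> frontier U)"

lemma height:
  assumes "norm y \<le> r/4"
  shows "\<bar>height y\<bar> < r/4" and "join y (height y) \<in> frontier U"
proof -
  have "\<exists>!t. \<bar>t\<bar> < r/4 \<and> join y t \<in> frontier U"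
    using vertical_line_crosses_frontier[OF assms] vertical_line_crosses_frontier_once[OF assms]
    by blast
  then have "\<bar>height y\<bar> < r/4 \<and> join y (height y) \<in> frontier U"
    unfolding height_def by (rule theI')
  then show "\<bar>height y\<bar> < r/4" "join y (height y) \<in> frontier U"
    by auto
qed

lemma height_unique: "norm y \<le> r/4 \<Longrightarrow> \<bar>t\<bar> < r/4 \<Longrightarrow> join y t \<in> frontier U \<Longrightarrow> height y = t"
  using vertical_line_crosses_frontier_once height by blast

lemma norm_graph_le: "norm y \<le> r/4 \<Longrightarrow> norm (join y (height y)) \<le> r/2"
  using norm_join_le[of y "height y"] height(1)[of y] by linarith

definition graph_normal :: "real^'m \<Rightarrow> real^('m option)" where
  "graph_normal y = \<nu> (join y (height y))"

definition gradient :: "real^'m \<Rightarrow> real^'m" where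
  "gradient y = - (1 / vertical (graph_normal y)) *\<^sub>R tangential (graph_normal y)"

lemma graph_normal:
  assumes "norm y \<le> r/4"
  shows "norm (graph_normal y) = 1" and "1/2 \<le> vertical (graph_normal y)"
    and "vertical (graph_normal y) \<le> 1" and "norm (tangential (graph_normal y)) \<le> 1"
proof -
  show norm1: "norm (graph_normal y) = 1"
    using norm_normal height(2)[OF assms] by (simp add: graph_normal_def)
  show "1/2 \<le> vertical (graph_normal y)"
    using vertical_normal_ge height(2) norm_graph_le assms by (simp add: graph_normal_def)
  show "vertical (graph_normal y) \<le> 1" "norm (tangential (graph_normal y)) \<le> 1"
    using abs_vertical_le[of "graph_normal y"] norm_tangential_le[of "graph_normal y"] norm1 by auto
qed

end


context normalized_two_sided_balls
begin

lemma height_increment_tangency: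
  assumes "norm y \<le> r/4" "norm z \<le> r/4"
  shows "2 * r * \<bar>(z - y) \<bullet> tangential (graph_normal y) + (height z - height y) * vertical (graph_normal y)\<bar>
    \<le> (norm (z - y))\<^sup>2 + (height z - height y)\<^sup>2"
proof -
  have "join z (height z) - join y (height y) = join (z - y) (height z - height y)"
    by (simp add: join_diff)
  then show ?thesis
    using frontier_near_tangent_plane[OF height(2)[OF assms(2)] height(2)[OF assms(1)]]
    by (simp add: graph_normal_def inner_join norm_join)
qed

lemma height_lipschitz:
  assumes "norm y \<le> r/4" "norm z \<le> r/4"
  shows "\<bar>height z - height y\<bar> \<le> 5 * norm (z - y)"
proof (rule height_increment_le[OF r_pos height_increment_tangency[OF assms] graph_normal(2,3)[OF assms(1)]])
  have "\<bar>(z - y) \<bullet> tangential (graph_normal y)\<bar> \<le> norm (z - y) * norm (tangential (graph_normal y))"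
    by (rule Cauchy_Schwarz_ineq2)
  also have "\<dots> \<le> norm (z - y)"
    using graph_normal(4)[OF assms(1)] mult_left_mono[of _ 1 "norm (z - y)"] by simp
  finally show "\<bar>(z - y) \<bullet> tangential (graph_normal y)\<bar> \<le> norm (z - y)" .
  show "\<bar>height z - height y\<bar> \<le> r/2"
    using height(1)[OF assms(1)] height(1)[OF assms(2)] by linarith
  show "norm (z - y) \<le> r/2"
    using norm_triangle_ineq4[of z y] assms by linarith
qed simp

lemma height_linearization:
  assumes "norm y \<le> r/4" "norm z \<le> r/4"
  shows "\<bar>height z - height y - gradient y \<bullet> (z - y)\<bar> \<le> 26 / r * (norm (z - y))\<^sup>2"
proof -
  have "gradient y \<bullet> (z - y) = - ((z - y) \<bullet> tangential (graph_normal y)) / vertical (graph_normal y)"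
    by (simp add: gradient_def inner_commute)
  then show ?thesis
    using height_linearization_le[OF r_pos height_increment_tangency[OF assms]
        graph_normal(2)[OF assms(1)] height_lipschitz[OF assms]]
    by simp
qed

lemma height_has_derivative:
  "y \<in> cball 0 (r/4) \<Longrightarrow> (height has_derivative (\<lambda>v. gradient y \<bullet> v)) (at y within cball 0 (r/4))"
  by (rule has_derivative_if_quadratic_error[where C = "26 / r"]) (use r_pos height_linearization in auto)

lemma graph_normal_lipschitz: "(6 / r)-lipschitz_on (cball 0 (r/4)) graph_normal"
proof (rule lipschitz_onI)
  fix y z :: "real^'m" assume "y \<in> cball 0 (r/4)" "z \<in> cball 0 (r/4)"
  then have yz: "norm y \<le> r/4" "norm z \<le> r/4" by auto
  have "dist (graph_normal y) (graph_normal z) \<le> norm (join y (height y) - join z (height z)) / r"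
    using normal_lipschitz[OF height(2)[OF yz(1)] height(2)[OF yz(2)]]
    by (simp add: graph_normal_def dist_norm)
  also have "norm (join y (height y) - join z (height z)) \<le> norm (y - z) + \<bar>height y - height z\<bar>"
    using norm_join_le by (simp add: join_diff)
  also have "\<bar>height y - height z\<bar> \<le> 5 * norm (y - z)"
    using height_lipschitz[OF yz(2,1)] .
  finally show "dist (graph_normal y) (graph_normal z) \<le> 6 / r * dist y z"
    using r_pos by (simp add: dist_norm divide_right_mono field_simps)
qed (use r_pos in simp)

lemma continuous_on_gradient: "continuous_on (cball 0 (r/4)) gradient"
proof -
  have N: "continuous_on (cball 0 (r/4)) graph_normal"
    by (rule lipschitz_on_continuous_on[OF graph_normal_lipschitz])
  have "continuous_on (cball 0 (r/4))
      (\<lambda>y. - (1 / vertical (graph_normal y)) *\<^sub>R tangential (graph_normal y))"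
    using graph_normal(2)
    by (intro continuous_intros bounded_linear.continuous_on[OF bounded_linear_vertical N]
        bounded_linear.continuous_on[OF bounded_linear_tangential N]) force
  then show ?thesis unfolding gradient_def[abs_def] .
qed

lemma in_cylinder_iff:
  assumes "norm (tangential x) < r/4" "\<bar>vertical x\<bar> < r/4"
  shows "(x \<in> U \<longleftrightarrow> vertical x < height (tangential x)) \<and>
    (x \<in> frontier U \<longleftrightarrow> vertical x = height (tangential x))"
proof -
  define y t where "y = tangential x" and "t = vertical x"
  have y: "norm y \<le> r/4" using assms by (simp add: y_def)
  let ?G = "join y (height y)"
  have G: "?G \<in> frontier U" "norm ?G \<le> r/2"
    using height(2)[OF y] norm_graph_le[OF y] by auto
  have x: "x = ?G + (t - height y) *\<^sub>R join 0 1"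
    by (simp add: y_def t_def join_scaleR join_add)
  have "\<bar>t - height y\<bar> \<le> \<bar>t\<bar> + \<bar>height y\<bar>" by (rule abs_triangle_ineq4)
  then have "\<bar>t - height y\<bar> < r/2"
    using height(1)[OF y] assms(2) unfolding t_def by argo
  then have close: "- (r/2) < t - height y" "t - height y < r/2"
    by (auto simp only: abs_less_iff)
  consider (below) "t < height y" | (above) "height y < t" | (on) "t = height y" by linarith
  then have "(x \<in> U \<longleftrightarrow> t < height y) \<and> (x \<in> frontier U \<longleftrightarrow> t = height y)"
  proof cases
    case below
    have "?G - (height y - t) *\<^sub>R join 0 1 \<in> U"
      using below_frontier_in[OF G, of "height y - t"] below close r_pos by simp
    moreover have "x = ?G - (height y - t) *\<^sub>R join 0 1"
      using x by (simp add: algebra_simps)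
    ultimately show ?thesis using below frontier_disjoint by auto
  next
    case above
    have "x \<notin> closure U"
      using above_frontier_out[OF G, of "t - height y"] above close r_pos x by simp
    then show ?thesis using above closure_subset frontier_subset_closure[of U] by auto
  next
    case on
    then have "x = ?G" using x by simp
    then show ?thesis using on G(1) frontier_disjoint by auto
  qed
  then show ?thesis unfolding y_def t_def .
qed

lemma normal_on_graph:
  assumes "norm y \<le> r/4"
  shows "\<nu> (join y (height y)) = (1 / sqrt ((norm (gradient y))\<^sup>2 + 1)) *\<^sub>R join (- gradient y) 1"
proof -
  define T c where "T = tangential (graph_normal y)" and "c = vertical (graph_normal y)"
  have c: "c \<ge> 1/2" using graph_normal(2)[OF assms] by (simp add: c_def)
  have "(norm T)\<^sup>2 + c\<^sup>2 = 1"
    using norm_tangential_vertical[of "graph_normal y"] graph_normal(1)[OF assms] by (simp add: T_def c_def)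
  moreover have g: "gradient y = - (1/c) *\<^sub>R T" by (simp add: gradient_def T_def c_def)
  ultimately have "(norm (gradient y))\<^sup>2 + 1 = (1/c)\<^sup>2"
    using c by (simp add: power2_eq_square field_simps)
  then have "sqrt ((norm (gradient y))\<^sup>2 + 1) = 1/c" using c by simp
  then have "(1 / sqrt ((norm (gradient y))\<^sup>2 + 1)) *\<^sub>R join (- gradient y) 1 = join T c"
    using c by (simp add: g join_scaleR)
  then show ?thesis by (simp add: T_def c_def graph_normal_def)
qed

lemma height_zero: "height 0 = 0" and gradient_zero: "gradient 0 = 0"
proof -
  show "height 0 = 0"
    using height_unique[of 0 0] zero_in_frontier r_pos by (simp add: join_eq_iff)
  then show "gradient 0 = 0"
    by (simp add: gradient_def graph_normal_def join_eq_iff[of 0 0 0, simplified] normal_zero)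
qed

lemma C1_chart_normalized: "C1_chart U 0 (r/4) (r/4) (mat 1) 0 height gradient"
proof -
  let ?C = "{x. norm (tangential x) < r/4 \<and> \<bar>vertical x\<bar> < r/4}"
  have "height y \<in> {- (r/4)<..<r/4}" if "y \<in> cball 0 (r/4)" for y
    using abs_less_iff[THEN iffD1, OF height(1)[of y]] that by simp
  moreover have "?C \<inter> U = {x \<in> ?C. vertical x < height (tangential x)}"
    and "?C \<inter> frontier U = {x \<in> ?C. vertical x = height (tangential x)}"
    using in_cylinder_iff by blast+
  ultimately show ?thesis
    unfolding C1_chart_def Let_def
    using r_pos height_zero gradient_zero continuous_on_gradient height_has_derivative
    by (simp add: orthogonal_matrix_id)
qed

end

lemma C1_chart_normalize:
  fixes A :: "real^('m::finite option)^('m option)"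
  assumes "orthogonal_matrix A" "det A = 1" "A *v x0 + c = 0"
  shows "C1_chart ((\<lambda>x. A *v x + c) ` \<Omega>) 0 \<rho> h (mat 1) 0 \<phi> g \<longleftrightarrow> C1_chart \<Omega> x0 \<rho> h A c \<phi> g"
proof -
  interpret rigid_motion A c by unfold_locales (fact assms(1))
  have T: "(\<lambda>x. A *v x + c) = T" by (simp add: fun_eq_iff T_def)
  show ?thesis
    unfolding C1_chart_def Let_def T using assms by (simp add: frontier_image_T orthogonal_matrix_id)
qed

lemma (in rigid_motion) normal_formula_iff:
  "n (matrix_inv A *v (q - c)) = matrix_inv A *v w \<longleftrightarrow> A *v n (Ti q) = w"
  by (metis A_transpose_A Ti_def orthogonal_A orthogonal_matrix_inv_eq_transpose transpose_A_A)

lemma two_sided_balls_chart: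
  fixes \<Omega> :: "(real^('m::finite option)) set"
  assumes "two_sided_balls \<Omega> r n" "x0 \<in> frontier \<Omega>"
  shows "\<exists>\<rho> h A c \<phi> g. C1_chart \<Omega> x0 \<rho> h A c \<phi> g \<and> (\<forall>y\<in>ball 0 \<rho>.
    n (matrix_inv A *v (join y (\<phi> y) - c)) = matrix_inv A *v ((1 / sqrt ((norm (g y))\<^sup>2 + 1)) *\<^sub>R join (- g y) 1))"
proof -
  interpret two_sided_balls \<Omega> r n by (fact assms(1))
  obtain f where f: "orthogonal_transformation f" "det (matrix f) = 1" "f (n x0) = join 0 1"
    using rotation_exists[OF card_option_ge_2] norm_normal[OF assms(2)] by (metis norm_join_0_1)
  define A where "A = matrix f"
  have A: "orthogonal_matrix A" "A *v n x0 = join 0 1"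
    using f by (simp_all add: A_def orthogonal_transformation_matrix matrix_works orthogonal_transformation_linear)
  interpret rigid_motion A "- (A *v x0)" by unfold_locales (fact A(1))
  have T: "(\<lambda>x. A *v x + - (A *v x0)) = T" and "T x0 = 0" by (simp_all add: fun_eq_iff T_def)
  interpret normalized_two_sided_balls "T ` \<Omega>" r "\<lambda>q. A *v n (Ti q)"
  proof (rule normalized_two_sided_balls.intro[OF two_sided_balls_image[OF assms(1)]])
    show "normalized_two_sided_balls_axioms (T ` \<Omega>) (\<lambda>q. A *v n (Ti q))"
      using assms(2) \<open>T x0 = 0\<close> A(2) by unfold_locales (auto simp: frontier_image_T, metis Ti_T)
  qed
  have "C1_chart ((\<lambda>x. A *v x + - (A *v x0)) ` \<Omega>) 0 (r/4) (r/4) (mat 1) 0 height gradient"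
    unfolding T by (rule C1_chart_normalized)
  then have "C1_chart \<Omega> x0 (r/4) (r/4) A (- (A *v x0)) height gradient"
    using C1_chart_normalize[OF A(1), of x0 "- (A *v x0)"] f(2) by (simp add: A_def)
  moreover have "n (matrix_inv A *v (join y (height y) - - (A *v x0))) =
      matrix_inv A *v ((1 / sqrt ((norm (gradient y))\<^sup>2 + 1)) *\<^sub>R join (- gradient y) 1)"
    if "y \<in> ball 0 (r/4)" for y
    unfolding normal_formula_iff using normal_on_graph that by simp
  ultimately show ?thesis by blast
qed

lemma cond_S_imp_cond_L:
  assumes "open \<Omega>" "r > 0" "cond_S r \<Omega>"
  shows "cond_L r \<Omega>"
proof -
  obtain n where "two_sided_balls \<Omega> r n"
    using cond_S_imp_two_sided_balls[OF assms] by blast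
  then interpret two_sided_balls \<Omega> r n .
  have "C1_boundary \<Omega>" "outward_normal \<Omega> n"
    unfolding C1_boundary_def outward_normal_def
    using two_sided_balls_chart[OF \<open>two_sided_balls \<Omega> r n\<close>] by blast+
  then show ?thesis
    unfolding cond_L_def using normal_lipschitz by (auto simp: field_simps)
qed


section \<open>Flatness of a chart with Lipschitz normal\<close>

lemma abs_le_if_derivative_le_linear:
  fixes f f' :: "real \<Rightarrow> real"
  assumes "f 0 = 0"
    and deriv: "\<And>t. 0 \<le> t \<Longrightarrow> t \<le> 1 \<Longrightarrow> (f has_real_derivative f' t) (at t)"
    and bound: "\<And>t. 0 \<le> t \<Longrightarrow> t \<le> 1 \<Longrightarrow> \<bar>f' t\<bar> \<le> 2 * K * t"
  shows "\<bar>f 1\<bar> \<le> K"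
proof -
  have "\<sigma> * f 0 + K * 0\<^sup>2 \<le> \<sigma> * f 1 + K * 1\<^sup>2" if "\<sigma> = 1 \<or> \<sigma> = -1" for \<sigma>
  proof (rule DERIV_nonneg_imp_nondecreasing[where f = "\<lambda>t. \<sigma> * f t + K * t\<^sup>2"])
    fix t :: real assume t: "0 \<le> t" "t \<le> 1"
    have "((\<lambda>t. \<sigma> * f t + K * t\<^sup>2) has_real_derivative \<sigma> * f' t + K * (2 * t)) (at t)"
      using deriv[OF t] by (auto intro!: derivative_eq_intros)
    moreover have "0 \<le> \<sigma> * f' t + K * (2 * t)"
      using bound[OF t] that by (auto simp: abs_le_iff algebra_simps)
    ultimately show "\<exists>y. ((\<lambda>t. \<sigma> * f t + K * t\<^sup>2) has_real_derivative y) (at t) \<and> 0 \<le> y"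
      by blast
  qed simp
  from this[of 1] this[of "-1"] show ?thesis
    using \<open>f 0 = 0\<close> by (simp add: abs_le_iff)
qed

lemma tilted_direction:
  fixes u :: "real^('m::finite option)"
  assumes \<sigma>: "\<sigma> = 1 \<or> \<sigma> = -1" and u: "norm u = 1" and "u \<noteq> (- \<sigma>) *\<^sub>R join 0 1"
  obtains w \<kappa> where "0 < \<kappa>" "w \<bullet> u = \<kappa>" "\<sigma> * vertical w = \<kappa>" "norm (tangential w) \<le> 1"
    "norm w \<le> 2"
proof
  define \<kappa> where "\<kappa> = 1 + \<sigma> * vertical u"
  show "\<kappa> > 0"
  proof (rule ccontr)
    assume "\<not> \<kappa> > 0"
    then have "vertical u = - \<sigma>"
      using abs_vertical_le[of u] u \<sigma> by (auto simp: \<kappa>_def)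
    moreover from this have "tangential u = 0"
      using norm_tangential_vertical[of u] u \<sigma> by auto
    ultimately show False
      using \<open>u \<noteq> (- \<sigma>) *\<^sub>R join 0 1\<close> by (simp add: join_scaleR eq_join_iff)
  qed
  have "u \<bullet> u = 1" using u by (simp add: dot_square_norm)
  then show "(u + \<sigma> *\<^sub>R join 0 1) \<bullet> u = \<kappa>" "\<sigma> * vertical (u + \<sigma> *\<^sub>R join 0 1) = \<kappa>"
    using \<sigma> by (auto simp: \<kappa>_def inner_add_left inner_join algebra_simps)
  show "norm (tangential (u + \<sigma> *\<^sub>R join 0 1)) \<le> 1"
    using norm_tangential_le[of u] u by simp
  show "norm (u + \<sigma> *\<^sub>R join 0 1) \<le> 2"
    using norm_triangle_ineq[of u "\<sigma> *\<^sub>R join 0 1"] u \<sigma> by auto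
qed

lemma scaleR_mem_tangent_ball:
  fixes u w :: "'a::real_inner"
  assumes "norm u = 1" "0 < d" "w \<bullet> u = \<kappa>" "norm w \<le> 2" "0 < t" "2 * t < d * \<kappa>"
  shows "t *\<^sub>R w \<in> ball (0 + d *\<^sub>R u) d"
proof -
  have "(norm (t *\<^sub>R w))\<^sup>2 \<le> t\<^sup>2 * 4"
    using assms(5) power_mono[OF assms(4), of 2] by (simp add: power_mult_distrib)
  also have "\<dots> < 2 * d * (t * \<kappa>)"
    using assms(5) assms(6)[unfolded mult.commute[of d]] by (simp add: power2_eq_square)
  finally show ?thesis
    using mem_tangent_ball_iff[OF assms(1,2), of "t *\<^sub>R w" 0] assms(3) by simp
qed

locale normalized_chart =
  fixes U :: "(real^('m::finite option)) set" and r \<rho> h \<phi> g \<nu>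
  assumes r_pos: "r > 0"
    and chart: "C1_chart U 0 \<rho> h (mat 1) 0 \<phi> g"
    and normal_on_graph: "\<And>y. y \<in> ball 0 \<rho> \<Longrightarrow>
      \<nu> (join y (\<phi> y)) = (1 / sqrt ((norm (g y))\<^sup>2 + 1)) *\<^sub>R join (- g y) 1"
    and normal_lipschitz: "\<And>p q. p \<in> frontier U \<Longrightarrow> q \<in> frontier U \<Longrightarrow>
      norm (\<nu> p - \<nu> q) \<le> norm (p - q) / r"
begin

lemma rho_pos: "\<rho> > 0" and h_pos: "h > 0" and phi_zero: "\<phi> 0 = 0" and g_zero: "g 0 = 0"
  and continuous_g: "continuous_on (cball 0 \<rho>) g"
  and phi_has_derivative: "y \<in> cball 0 \<rho> \<Longrightarrow> (\<phi> has_derivative (\<lambda>v. g y \<bullet> v)) (at y within cball 0 \<rho>)"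
  using chart by (auto simp: C1_chart_def)

lemma phi_range: "y \<in> cball 0 \<rho> \<Longrightarrow> \<bar>\<phi> y\<bar> < h"
proof -
  assume "y \<in> cball 0 \<rho>"
  then have "\<phi> y \<in> {- h<..<h}" using chart unfolding C1_chart_def by blast
  then show ?thesis by auto
qed

lemma in_cylinder_iff:
  assumes "norm (tangential x) < \<rho>" "\<bar>vertical x\<bar> < h"
  shows "x \<in> U \<longleftrightarrow> vertical x < \<phi> (tangential x)"
    and "x \<in> frontier U \<longleftrightarrow> vertical x = \<phi> (tangential x)"
  using chart assms by (auto simp: C1_chart_def Let_def set_eq_iff)

lemma graph_in_frontier: "y \<in> ball 0 \<rho> \<Longrightarrow> join y (\<phi> y) \<in> frontier U"
  using in_cylinder_iff(2)[of "join y (\<phi> y)"] phi_range[of y] by simp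

lemma zero_in_frontier: "0 \<in> frontier U"
  using graph_in_frontier[of 0] rho_pos by (simp add: phi_zero)

lemma normal_zero: "\<nu> 0 = join 0 1"
  using normal_on_graph[of 0] rho_pos by (simp add: phi_zero g_zero)

lemma phi_little_o:
  assumes "\<eta> > 0"
  obtains \<delta> where "\<delta> > 0" "\<And>z. norm z < \<delta> \<Longrightarrow> \<bar>\<phi> z\<bar> \<le> \<eta> * norm z"
proof -
  obtain d where "d > 0" and d: "\<And>y. y \<in> cball 0 \<rho> \<Longrightarrow> norm (y - 0) < d \<Longrightarrow>
      norm (\<phi> y - \<phi> 0 - g 0 \<bullet> (y - 0)) \<le> \<eta> * norm (y - 0)"
    using phi_has_derivative[of 0] rho_pos assms unfolding has_derivative_within_alt by force
  show ?thesis
    by (rule that[of "min d \<rho>"]) (use \<open>d > 0\<close> rho_pos d in \<open>auto simp: phi_zero g_zero\<close>)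
qed

text \<open>The Lipschitz bound between the normals at \<open>0\<close> and at a graph point bounds the gradient.\<close>

lemma gradient_le:
  assumes w: "w \<in> ball 0 \<rho>" and "\<eta> \<le> 1" "\<bar>\<phi> w\<bar> \<le> \<eta> * norm w" "norm (g w) \<le> \<eta>"
  shows "norm (g w) \<le> (1 + \<eta>)\<^sup>2 * norm w / r"
proof -
  define k where "k = 1 / sqrt ((norm (g w))\<^sup>2 + 1)"
  have sqrt_pos: "sqrt ((norm (g w))\<^sup>2 + 1) > 0" by (simp add: add_nonneg_pos)
  have "norm (k *\<^sub>R g w) \<le> norm (\<nu> (join w (\<phi> w)) - \<nu> 0)"
    using norm_tangential_le[of "\<nu> (join w (\<phi> w)) - \<nu> 0"] normal_on_graph[OF w]
    by (simp add: k_def normal_zero)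
  also have "\<dots> \<le> norm (join w (\<phi> w)) / r"
    using normal_lipschitz[OF graph_in_frontier[OF w] zero_in_frontier] by simp
  also have "\<dots> \<le> (1 + \<eta>) * norm w / r"
    using norm_join_le[of w "\<phi> w"] assms(3) r_pos by (simp add: divide_right_mono algebra_simps)
  finally have g_le: "norm (g w) \<le> (1 + \<eta>) * norm w / r * sqrt ((norm (g w))\<^sup>2 + 1)"
    using sqrt_pos by (simp add: k_def field_simps)
  have "sqrt ((norm (g w))\<^sup>2 + 1) \<le> sqrt ((1 + norm (g w))\<^sup>2)"
    by (intro real_sqrt_le_mono) (simp add: power2_eq_square algebra_simps)
  then have sqrt_le: "sqrt ((norm (g w))\<^sup>2 + 1) \<le> 1 + \<eta>" using assms(4) by simp
  have "0 \<le> \<eta>" using norm_ge_zero assms(4) by (rule order_trans)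
  then have "0 \<le> (1 + \<eta>) * norm w / r" using r_pos by simp
  then have "(1 + \<eta>) * norm w / r * sqrt ((norm (g w))\<^sup>2 + 1) \<le> (1 + \<eta>) * norm w / r * (1 + \<eta>)"
    by (rule mult_left_mono[OF sqrt_le])
  with g_le have "norm (g w) \<le> (1 + \<eta>) * norm w / r * (1 + \<eta>)" by (rule order_trans)
  then show ?thesis by (simp add: power2_eq_square mult.commute mult.left_commute)
qed

lemma gradient_small:
  assumes "\<epsilon> > 0"
  obtains \<delta> where "0 < \<delta>" "\<delta> \<le> \<rho>" "\<And>w. norm w < \<delta> \<Longrightarrow> norm (g w) \<le> (1 + \<epsilon>) * norm w / r"
proof -
  define \<eta> where "\<eta> = min 1 (\<epsilon>/3)"
  have \<eta>: "\<eta> > 0" "\<eta> \<le> 1" "3 * \<eta> \<le> \<epsilon>" using assms by (auto simp: \<eta>_def)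
  have "\<eta> * \<eta> \<le> \<eta> * 1" using \<eta> by (intro mult_left_mono) auto
  moreover have "(1 + \<eta>)\<^sup>2 = 1 + 2 * \<eta> + \<eta> * \<eta>" by (simp add: power2_eq_square algebra_simps)
  ultimately have "(1 + \<eta>)\<^sup>2 \<le> 1 + \<epsilon>" using \<eta> by linarith
  obtain \<delta>1 where "\<delta>1 > 0" and \<delta>1: "\<And>z. norm z < \<delta>1 \<Longrightarrow> \<bar>\<phi> z\<bar> \<le> \<eta> * norm z"
    using phi_little_o[OF \<eta>(1)] by blast
  obtain \<delta>2 where "\<delta>2 > 0" and \<delta>2: "\<And>z. z \<in> cball 0 \<rho> \<Longrightarrow> dist z 0 < \<delta>2 \<Longrightarrow> dist (g z) (g 0) < \<eta>"
    using continuous_g \<eta>(1) rho_pos unfolding continuous_on_iff by (metis centre_in_cball less_imp_le)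
  show ?thesis
  proof (rule that[of "min \<rho> (min \<delta>1 \<delta>2)"])
    fix w :: "real^'m" assume "norm w < min \<rho> (min \<delta>1 \<delta>2)"
    then have "norm (g w) \<le> (1 + \<eta>)\<^sup>2 * norm w / r"
      using \<delta>1 \<delta>2[of w] \<eta>(2) g_zero by (intro gradient_le) (auto simp: dist_norm)
    also have "\<dots> \<le> (1 + \<epsilon>) * norm w / r"
      using \<open>(1 + \<eta>)\<^sup>2 \<le> 1 + \<epsilon>\<close> r_pos by (simp add: divide_right_mono mult_right_mono)
    finally show "norm (g w) \<le> (1 + \<epsilon>) * norm w / r" .
  qed (use rho_pos \<open>\<delta>1 > 0\<close> \<open>\<delta>2 > 0\<close> in auto)
qed

lemma phi_along_ray_has_derivative:
  assumes "norm (t *\<^sub>R z) < \<rho>"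
  shows "((\<lambda>s. \<phi> (s *\<^sub>R z)) has_real_derivative g (t *\<^sub>R z) \<bullet> z) (at t)"
proof -
  have "(\<phi> has_derivative (\<lambda>v. g (t *\<^sub>R z) \<bullet> v)) (at (t *\<^sub>R z))"
    using phi_has_derivative[of "t *\<^sub>R z"] assms at_within_interior[of "t *\<^sub>R z" "cball 0 \<rho>"] by simp
  moreover have "((\<lambda>s. s *\<^sub>R z) has_derivative (\<lambda>s. s *\<^sub>R z)) (at t)"
    by (intro derivative_eq_intros) auto
  ultimately have "((\<lambda>s. \<phi> (s *\<^sub>R z)) has_derivative (\<lambda>s. g (t *\<^sub>R z) \<bullet> (s *\<^sub>R z))) (at t)"
    by (rule has_derivative_compose[rotated])
  then show ?thesis
    by (rule has_derivative_imp_has_field_derivative) (simp add: mult.commute)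
qed

text \<open>Integrating the gradient bound along rays from \<open>0\<close>.\<close>

lemma phi_quadratic:
  assumes "\<epsilon> > 0"
  obtains \<delta> where "\<delta> > 0" "\<And>z. norm z < \<delta> \<Longrightarrow> 2 * r * \<bar>\<phi> z\<bar> \<le> (1 + \<epsilon>) * (norm z)\<^sup>2"
proof -
  obtain \<delta> where "0 < \<delta>" "\<delta> \<le> \<rho>" and g_small: "\<And>w. norm w < \<delta> \<Longrightarrow> norm (g w) \<le> (1 + \<epsilon>) * norm w / r"
    using gradient_small[OF assms] by blast
  show ?thesis
  proof (rule that)
    show "\<delta> > 0" by fact
    fix z :: "real^'m" assume z: "norm z < \<delta>"
    define K where "K = (1 + \<epsilon>) * (norm z)\<^sup>2 / (2 * r)"
    have tz: "norm (t *\<^sub>R z) < \<delta>" if "0 \<le> t" "t \<le> 1" for t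
      using z that mult_left_le_one_le[of "norm z" t] by simp
    have "\<bar>\<phi> (1 *\<^sub>R z)\<bar> \<le> K"
    proof (rule abs_le_if_derivative_le_linear)
      show "((\<lambda>t. \<phi> (t *\<^sub>R z)) has_real_derivative g (t *\<^sub>R z) \<bullet> z) (at t)"
        if "0 \<le> t" "t \<le> 1" for t
        using phi_along_ray_has_derivative tz[OF that] \<open>\<delta> \<le> \<rho>\<close> by simp
      show "\<bar>g (t *\<^sub>R z) \<bullet> z\<bar> \<le> 2 * K * t" if "0 \<le> t" "t \<le> 1" for t
      proof -
        have "\<bar>g (t *\<^sub>R z) \<bullet> z\<bar> \<le> norm (g (t *\<^sub>R z)) * norm z" by (rule Cauchy_Schwarz_ineq2)
        also have "\<dots> \<le> (1 + \<epsilon>) * norm (t *\<^sub>R z) / r * norm z"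
          using mult_right_mono[OF g_small[OF tz[OF that]] norm_ge_zero[of z]] by simp
        also have "\<dots> = 2 * K * t" using that r_pos by (simp add: K_def power2_eq_square field_simps)
        finally show ?thesis .
      qed
    qed (simp add: phi_zero)
    then show "2 * r * \<bar>\<phi> z\<bar> \<le> (1 + \<epsilon>) * (norm z)\<^sup>2"
      using r_pos by (simp add: K_def field_simps)
  qed
qed

lemma frontier_flat_at_zero:
  assumes "0 < s" "s < r"
  obtains \<delta> where "\<delta> > 0" "\<And>p. p \<in> frontier U \<Longrightarrow> norm p < \<delta> \<Longrightarrow> 2 * s * \<bar>p \<bullet> \<nu> 0\<bar> \<le> (norm p)\<^sup>2"
proof -
  obtain \<delta> where "\<delta> > 0" and \<delta>: "\<And>z. norm z < \<delta> \<Longrightarrow> 2 * r * \<bar>\<phi> z\<bar> \<le> r / s * (norm z)\<^sup>2"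
    using phi_quadratic[of "(r - s) / s"] assms by (auto simp: field_simps)
  show ?thesis
  proof (rule that[of "min \<delta> (min \<rho> h)"])
    show "min \<delta> (min \<rho> h) > 0" using \<open>\<delta> > 0\<close> rho_pos h_pos by simp
    fix p assume p: "p \<in> frontier U" "norm p < min \<delta> (min \<rho> h)"
    then have "vertical p = \<phi> (tangential p)"
      using in_cylinder_iff(2)[of p] norm_tangential_le[of p] abs_vertical_le[of p] by simp
    moreover have "p \<bullet> \<nu> 0 = vertical p"
      unfolding normal_zero by (subst inner_commute) (simp add: inner_join)
    ultimately have "2 * s * \<bar>p \<bullet> \<nu> 0\<bar> = s / r * (2 * r * \<bar>\<phi> (tangential p)\<bar>)"
      using r_pos by simp
    also have "\<dots> \<le> s / r * (r / s * (norm (tangential p))\<^sup>2)"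
      using \<delta>[of "tangential p"] norm_tangential_le[of p] p(2) assms r_pos
      by (intro mult_left_mono) auto
    also have "\<dots> = (norm (tangential p))\<^sup>2" using assms r_pos by simp
    also have "\<dots> \<le> (norm p)\<^sup>2" using norm_tangential_vertical[of p] by simp
    finally show "2 * s * \<bar>p \<bullet> \<nu> 0\<bar> \<le> (norm p)\<^sup>2" .
  qed
qed

lemma normal_segment_at_zero:
  "\<exists>\<epsilon>>0. \<forall>t. 0 < t \<longrightarrow> t < \<epsilon> \<longrightarrow> - t *\<^sub>R \<nu> 0 \<in> U \<and> t *\<^sub>R \<nu> 0 \<in> - closure U"
proof -
  have "- t *\<^sub>R \<nu> 0 \<in> U \<and> t *\<^sub>R \<nu> 0 \<in> - closure U" if "0 < t" "t < h" for t
  proof -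
    have "join 0 (- t) \<in> U" "join 0 t \<notin> U" "join 0 t \<notin> frontier U"
      using in_cylinder_iff[of "join 0 (- t)"] in_cylinder_iff[of "join 0 t"] rho_pos that
      by (simp_all add: phi_zero)
    then show ?thesis
      using closure_Un_frontier[of U] by (auto simp: normal_zero join_scaleR)
  qed
  then show ?thesis using h_pos by blast
qed

text \<open>A ball of radius \<open>d\<close> through \<open>0\<close> that lies on one side of the graph must be tangent to it
  at \<open>0\<close>: otherwise it contains points \<open>t (u + \<sigma> e\<^sub>N)\<close> with \<open>t\<close> small, which lie on the wrong side
  because \<open>\<phi>(z) = o(|z|)\<close>.\<close>

lemma tangent_ball_centre:
  assumes \<sigma>: "\<sigma> = 1 \<or> \<sigma> = -1" and "0 < d" "norm a = d"
    and side: "\<And>q. q \<in> ball a d \<Longrightarrow> norm (tangential q) < \<rho> \<Longrightarrow> \<bar>vertical q\<bar> < h \<Longrightarrow>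
      \<sigma> * (vertical q - \<phi> (tangential q)) < 0"
  shows "a = (- \<sigma> * d) *\<^sub>R \<nu> 0"
proof (rule ccontr)
  define u where "u = (1/d) *\<^sub>R a"
  have u: "norm u = 1" "a = 0 + d *\<^sub>R u" using assms by (simp_all add: u_def)
  assume "a \<noteq> (- \<sigma> * d) *\<^sub>R \<nu> 0"
  then have "u \<noteq> (- \<sigma>) *\<^sub>R join 0 1" using u(2) by (auto simp: normal_zero algebra_simps)
  then obtain w \<kappa> where "0 < \<kappa>" "w \<bullet> u = \<kappa>" and w: "\<sigma> * vertical w = \<kappa>"
    "norm (tangential w) \<le> 1" "norm w \<le> 2"
    using tilted_direction[OF \<sigma> u(1)] by blast
  obtain \<delta> where "\<delta> > 0" and \<delta>: "\<And>z. norm z < \<delta> \<Longrightarrow> \<bar>\<phi> z\<bar> \<le> (\<kappa>/2) * norm z"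
    using phi_little_o[of "\<kappa>/2"] \<open>\<kappa> > 0\<close> by auto
  define t where "t = min (\<delta>/2) (min (\<rho>/4) (min (h/4) (d * \<kappa> / 4)))"
  have "t \<le> \<delta>/2" "t \<le> \<rho>/4" "t \<le> h/4" "t \<le> d * \<kappa> / 4" "0 < d * \<kappa>"
    using \<open>0 < d\<close> \<open>\<kappa> > 0\<close> by (simp_all add: t_def)
  moreover have "0 < t"
    using \<open>\<delta> > 0\<close> rho_pos h_pos \<open>0 < d\<close> \<open>\<kappa> > 0\<close> by (simp add: t_def)
  ultimately have t: "0 < t" "t < \<delta>" "2 * t < \<rho>" "2 * t < h" "2 * t < d * \<kappa>"
    by linarith+
  have nt: "norm (tangential (t *\<^sub>R w)) \<le> t"
    using w(2) t(1) mult_left_mono[OF w(2), of t] by simp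
  have "\<bar>vertical (t *\<^sub>R w)\<bar> \<le> t * norm w"
    using abs_vertical_le[of "t *\<^sub>R w"] t(1) by simp
  then have "\<bar>vertical (t *\<^sub>R w)\<bar> < h"
    using mult_left_mono[OF w(3), of t] t by linarith
  moreover have "norm (tangential (t *\<^sub>R w)) < \<rho>" using nt t by linarith
  moreover have "t *\<^sub>R w \<in> ball a d"
    unfolding u(2) using scaleR_mem_tangent_ball[OF u(1) \<open>0 < d\<close> \<open>w \<bullet> u = \<kappa>\<close> w(3) t(1,5)] .
  ultimately have "\<sigma> * (vertical (t *\<^sub>R w) - \<phi> (tangential (t *\<^sub>R w))) < 0"
    using side by blast
  then have "\<sigma> * vertical (t *\<^sub>R w) < \<sigma> * \<phi> (tangential (t *\<^sub>R w))"
    by (simp only: right_diff_distrib diff_less_0_iff_less)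
  moreover have "\<sigma> * vertical (t *\<^sub>R w) = t * \<kappa>"
    by (simp add: w(1)[symmetric] algebra_simps)
  moreover have "\<bar>\<sigma> * \<phi> (tangential (t *\<^sub>R w))\<bar> \<le> t * \<kappa> / 2"
  proof -
    have "\<bar>\<phi> (tangential (t *\<^sub>R w))\<bar> \<le> (\<kappa>/2) * norm (tangential (t *\<^sub>R w))"
      by (rule \<delta>) (use nt t(2) in linarith)
    also have "\<dots> \<le> (\<kappa>/2) * t" using nt \<open>\<kappa> > 0\<close> by (intro mult_left_mono) auto
    finally show ?thesis using \<sigma> by (auto simp: abs_mult algebra_simps)
  qed
  moreover have "0 < t * \<kappa>" using t(1) \<open>\<kappa> > 0\<close> by simp
  ultimately show False
    using abs_ge_self[of "\<sigma> * \<phi> (tangential (t *\<^sub>R w))"] by linarith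
qed

end


section \<open>Growing tangent balls\<close>

definition tangent_sphere_radius :: "'a::real_inner \<Rightarrow> 'a \<Rightarrow> 'a \<Rightarrow> real" where
  "tangent_sphere_radius x0 v p = (norm (p - x0))\<^sup>2 / (2 * ((p - x0) \<bullet> v))"

lemma mem_tangent_ball_iff_radius:
  fixes x0 v p :: "'a::real_inner"
  assumes "norm v = 1" "s > 0"
  shows "p \<in> ball (x0 + s *\<^sub>R v) s \<longleftrightarrow> (p - x0) \<bullet> v > 0 \<and> tangent_sphere_radius x0 v p < s"
proof -
  have "(norm (p - x0))\<^sup>2 < 2 * s * ((p - x0) \<bullet> v) \<Longrightarrow> (p - x0) \<bullet> v > 0"
    using assms(2) by (smt (verit) mult_nonneg_nonpos zero_le_power2)
  then show ?thesis
    unfolding mem_tangent_ball_iff[OF assms] tangent_sphere_radius_def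
    using assms(2) by (auto simp: field_simps)
qed

lemma inner_pos_if_mem_tangent_cball:
  fixes x0 v p :: "'a::real_inner"
  assumes "norm v = 1" "0 < s" "p \<in> cball (x0 + s *\<^sub>R v) s" "p \<noteq> x0"
  shows "(p - x0) \<bullet> v > 0"
proof -
  have "(norm (p - x0 + (- s) *\<^sub>R v))\<^sup>2 \<le> s\<^sup>2"
    using assms(2,3) by (auto simp: dist_norm norm_minus_commute algebra_simps intro: power_mono)
  then have "(norm (p - x0))\<^sup>2 \<le> 2 * s * ((p - x0) \<bullet> v)"
    using norm_add_scaleR_unit_square[OF assms(1), of "p - x0" "- s"] by simp
  moreover have "0 < (norm (p - x0))\<^sup>2" using assms(4) by simp
  ultimately have "0 < s * ((p - x0) \<bullet> v)" by linarith
  then show ?thesis using assms(2) by (simp add: zero_less_mult_iff)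
qed

lemma dist_tangent_sphere_radius:
  fixes x0 v p :: "'a::real_inner"
  assumes "norm v = 1" "(p - x0) \<bullet> v > 0"
  shows "dist p (x0 + tangent_sphere_radius x0 v p *\<^sub>R v) = tangent_sphere_radius x0 v p"
proof -
  define s where "s = tangent_sphere_radius x0 v p"
  have "(norm (p - x0))\<^sup>2 = 2 * s * ((p - x0) \<bullet> v)"
    using assms(2) by (simp add: s_def tangent_sphere_radius_def field_simps)
  then have "(norm ((p - x0) + (- s) *\<^sub>R v))\<^sup>2 = s\<^sup>2"
    by (simp only: norm_add_scaleR_unit_square[OF assms(1)]) (simp add: power2_eq_square)
  then have "(norm (p - (x0 + s *\<^sub>R v)))\<^sup>2 = s\<^sup>2" by (simp add: diff_diff_eq)
  moreover have "0 \<le> s"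
    using assms(2) by (simp add: s_def tangent_sphere_radius_def)
  ultimately show ?thesis
    by (simp add: dist_norm power2_eq_imp_eq flip: s_def)
qed

lemma not_mem_tangent_ball_if_flat:
  fixes x0 v p :: "'a::real_inner"
  assumes "norm v = 1" "0 < s" "s \<le> s0" "2 * s0 * \<bar>(p - x0) \<bullet> v\<bar> \<le> (norm (p - x0))\<^sup>2"
  shows "p \<notin> ball (x0 + s *\<^sub>R v) s"
proof
  assume "p \<in> ball (x0 + s *\<^sub>R v) s"
  then have "(norm (p - x0))\<^sup>2 < 2 * s * ((p - x0) \<bullet> v)"
    using mem_tangent_ball_iff[OF assms(1,2)] by blast
  moreover have "2 * s * ((p - x0) \<bullet> v) \<le> 2 * s * \<bar>(p - x0) \<bullet> v\<bar>"
    using assms(2) by (intro mult_left_mono) auto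
  moreover have "2 * s * \<bar>(p - x0) \<bullet> v\<bar> \<le> 2 * s0 * \<bar>(p - x0) \<bullet> v\<bar>"
    using assms(3) by (intro mult_right_mono) auto
  ultimately show False using assms(4) by linarith
qed

text \<open>The wanted ball is bounded by the smallest tangent sphere through a point of \<open>F\<close>
  in the closed ball and away from \<open>x\<^sub>0\<close>; such a point exists by compactness.\<close>

lemma largest_tangent_ball_missing:
  fixes F :: "'a::euclidean_space set"
  assumes "closed F" "norm v = 1" "0 < s0"
    and flat: "\<And>p. p \<in> F \<Longrightarrow> norm (p - x0) < \<delta> \<Longrightarrow> 2 * s0 * \<bar>(p - x0) \<bullet> v\<bar> \<le> (norm (p - x0))\<^sup>2"
    and "\<delta> > 0" and meets: "ball (x0 + s0 *\<^sub>R v) s0 \<inter> F \<noteq> {}"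
  obtains s1 y where "0 < s1" "s1 < s0" "y \<in> F" "y \<noteq> x0" "dist y (x0 + s1 *\<^sub>R v) = s1"
    "ball (x0 + s1 *\<^sub>R v) s1 \<inter> F = {}"
proof -
  let ?R = "tangent_sphere_radius x0 v"
  have far: "\<delta> \<le> norm (p - x0)" if "p \<in> F" "p \<in> ball (x0 + s *\<^sub>R v) s" "0 < s" "s \<le> s0" for p s
    using not_mem_tangent_ball_if_flat[OF assms(2) that(3,4) flat[OF that(1)]] that(2) by force
  define K where "K = F \<inter> cball (x0 + s0 *\<^sub>R v) s0 - ball x0 \<delta>"
  have "closed K" unfolding K_def using \<open>closed F\<close> by (intro closed_Diff closed_Int) auto
  moreover have "bounded K" unfolding K_def by (rule bounded_subset[OF bounded_cball]) auto
  ultimately have "compact K" by (simp add: compact_eq_bounded_closed)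
  have K: "p \<in> F" "p \<noteq> x0" "(p - x0) \<bullet> v > 0" if "p \<in> K" for p
  proof -
    have p: "p \<in> F" "p \<in> cball (x0 + s0 *\<^sub>R v) s0" "\<delta> \<le> dist x0 p"
      using that by (auto simp: K_def)
    moreover have "p \<noteq> x0" using p(3) \<open>\<delta> > 0\<close> by auto
    ultimately show "p \<in> F" "p \<noteq> x0" "(p - x0) \<bullet> v > 0"
      using inner_pos_if_mem_tangent_cball[OF assms(2,3)] by auto
  qed
  have in_K: "p \<in> K \<and> ?R p < s" if "p \<in> F" "p \<in> ball (x0 + s *\<^sub>R v) s" "0 < s" "s \<le> s0" for p s
  proof -
    have "p \<in> ball (x0 + s0 *\<^sub>R v) s0" "?R p < s"
      using that mem_tangent_ball_iff_radius[OF assms(2)] assms(3) by (auto intro: order.strict_trans2)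
    then show ?thesis
      using far[OF that] ball_subset_cball that(1) by (auto simp: K_def dist_norm norm_minus_commute)
  qed
  then have "K \<noteq> {}" using meets assms(3) by blast
  moreover have "continuous_on K ?R"
    unfolding tangent_sphere_radius_def using K(3) by (intro continuous_intros) force
  ultimately obtain y where "y \<in> K" and y_min: "\<And>p. p \<in> K \<Longrightarrow> ?R y \<le> ?R p"
    using continuous_attains_inf[OF \<open>compact K\<close>] by blast
  define s1 where "s1 = ?R y"
  have "0 < s1" using K[OF \<open>y \<in> K\<close>] by (simp add: s1_def tangent_sphere_radius_def)
  moreover have "s1 < s0" using meets in_K[OF _ _ assms(3) order_refl] y_min by (fastforce simp: s1_def)
  moreover have "ball (x0 + s1 *\<^sub>R v) s1 \<inter> F = {}"
    using in_K[OF _ _ \<open>0 < s1\<close>] \<open>s1 < s0\<close> y_min by (fastforce simp: s1_def)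
  moreover have "dist y (x0 + s1 *\<^sub>R v) = s1"
    using dist_tangent_sphere_radius[OF assms(2) K(3)[OF \<open>y \<in> K\<close>]] by (simp add: s1_def)
  ultimately show ?thesis using that K(1,2)[OF \<open>y \<in> K\<close>] by blast
qed

locale supporting_normal_field =
  fixes F U :: "'a::euclidean_space set" and r :: real and m :: "'a \<Rightarrow> 'a"
  assumes closed_F: "closed F" and frontier_subset: "frontier U \<subseteq> F" and r_pos: "r > 0"
    and norm_m: "\<And>x. x \<in> F \<Longrightarrow> norm (m x) = 1"
    and lipschitz_m: "\<And>x y. x \<in> F \<Longrightarrow> y \<in> F \<Longrightarrow> norm (m x - m y) \<le> norm (x - y) / r"
    and flat: "\<And>x s. x \<in> F \<Longrightarrow> 0 < s \<Longrightarrow> s < r \<Longrightarrow>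
      \<exists>\<delta>>0. \<forall>p\<in>F. norm (p - x) < \<delta> \<longrightarrow> 2 * s * \<bar>(p - x) \<bullet> m x\<bar> \<le> (norm (p - x))\<^sup>2"
    and centre: "\<And>y a d. y \<in> F \<Longrightarrow> 0 < d \<Longrightarrow> ball a d \<subseteq> U \<Longrightarrow> dist y a = d \<Longrightarrow> a = y + d *\<^sub>R m y"
    and segment: "\<And>x. x \<in> F \<Longrightarrow> \<exists>\<epsilon>>0. \<forall>t. 0 < t \<longrightarrow> t < \<epsilon> \<longrightarrow> x + t *\<^sub>R m x \<in> U"
begin

lemma tangent_ball_subset_if_misses:
  assumes "x0 \<in> F" "s > 0" "ball (x0 + s *\<^sub>R m x0) s \<inter> F = {}"
  shows "ball (x0 + s *\<^sub>R m x0) s \<subseteq> U"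
proof (rule ccontr)
  assume "\<not> ?thesis"
  obtain \<epsilon> where "\<epsilon> > 0" and \<epsilon>: "\<And>t. 0 < t \<Longrightarrow> t < \<epsilon> \<Longrightarrow> x0 + t *\<^sub>R m x0 \<in> U"
    using segment[OF assms(1)] by blast
  define t where "t = min (\<epsilon>/2) s"
  have t: "0 < t" "t < \<epsilon>" "t \<le> s" using \<open>\<epsilon> > 0\<close> assms(2) by (auto simp: t_def)
  have "dist (x0 + s *\<^sub>R m x0) (x0 + t *\<^sub>R m x0) = norm ((s - t) *\<^sub>R m x0)"
    by (simp add: dist_norm algebra_simps)
  also have "\<dots> = s - t" using norm_m[OF assms(1)] t(3) by simp
  finally
  have "x0 + t *\<^sub>R m x0 \<in> ball (x0 + s *\<^sub>R m x0) s" using t by (simp only: mem_ball)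
  then have "ball (x0 + s *\<^sub>R m x0) s \<inter> U \<noteq> {}"
    using \<epsilon>[OF t(1,2)] by blast
  with \<open>\<not> ?thesis\<close> have "ball (x0 + s *\<^sub>R m x0) s \<inter> frontier U \<noteq> {}"
    by (intro connected_Int_frontier) auto
  then show False using assms(3) frontier_subset by blast
qed

text \<open>A tangent ball of radius \<open>s < r\<close> meeting \<open>F\<close> would yield a smaller empty ball touching \<open>F\<close>
  at \<open>y\<close>, whose centre then fixes \<open>m(y)\<close>, contradicting the Lipschitz bound.\<close>

lemma tangent_ball_misses:
  assumes "x0 \<in> F" "0 < s" "s < r"
  shows "ball (x0 + s *\<^sub>R m x0) s \<inter> F = {}"
proof (rule ccontr)
  assume "ball (x0 + s *\<^sub>R m x0) s \<inter> F \<noteq> {}"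
  moreover obtain \<delta> where "\<delta> > 0"
    "\<And>p. p \<in> F \<Longrightarrow> norm (p - x0) < \<delta> \<Longrightarrow> 2 * s * \<bar>(p - x0) \<bullet> m x0\<bar> \<le> (norm (p - x0))\<^sup>2"
    using flat[OF assms] by blast
  ultimately obtain s1 y where s1: "0 < s1" "s1 < s" and y: "y \<in> F" "y \<noteq> x0"
    and touch: "dist y (x0 + s1 *\<^sub>R m x0) = s1" and miss: "ball (x0 + s1 *\<^sub>R m x0) s1 \<inter> F = {}"
    using largest_tangent_ball_missing[OF closed_F norm_m[OF assms(1)] assms(2)] by metis
  have eq: "x0 + s1 *\<^sub>R m x0 = y + s1 *\<^sub>R m y"
    using centre[OF y(1) s1(1) tangent_ball_subset_if_misses[OF assms(1) s1(1) miss] touch] .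
  have "x0 - y = (x0 + s1 *\<^sub>R m x0) - (y + s1 *\<^sub>R m y) + s1 *\<^sub>R (m y - m x0)"
    by (simp add: algebra_simps)
  also have "\<dots> = s1 *\<^sub>R (m y - m x0)" unfolding eq by simp
  finally have "norm (y - x0) = s1 * norm (m x0 - m y)"
    using s1(1) by (simp add: norm_minus_commute)
  moreover have "norm (m x0 - m y) \<le> norm (y - x0) / r"
    using lipschitz_m[OF assms(1) y(1)] by (simp add: norm_minus_commute)
  ultimately have "norm (y - x0) \<le> s1 * (norm (y - x0) / r)"
    using mult_left_mono[of "norm (m x0 - m y)" "norm (y - x0) / r" s1] s1(1) by linarith
  then have "norm (y - x0) * r \<le> norm (y - x0) * s1"
    using r_pos by (simp add: field_simps)
  then have "r \<le> s1" using y(2) by simp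
  then show False using s1 assms(3) by simp
qed

lemma tangent_ball_subset: "x0 \<in> F \<Longrightarrow> ball (x0 + r *\<^sub>R m x0) r \<subseteq> U"
proof
  fix q assume "x0 \<in> F" "q \<in> ball (x0 + r *\<^sub>R m x0) r"
  define s where "s = r - (r - dist (x0 + r *\<^sub>R m x0) q) / 3"
  have dq: "0 \<le> dist (x0 + r *\<^sub>R m x0) q" "dist (x0 + r *\<^sub>R m x0) q < r"
    using \<open>q \<in> ball _ _\<close> by simp_all
  then have s: "0 < s" "s < r" unfolding s_def by argo+
  have "dist (x0 + s *\<^sub>R m x0) q \<le> dist (x0 + r *\<^sub>R m x0) q + norm ((r - s) *\<^sub>R m x0)"
    by (rule order_trans[OF dist_triangle[of _ q "x0 + r *\<^sub>R m x0"]])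
      (simp add: dist_norm algebra_simps dist_commute norm_minus_commute)
  then have "dist (x0 + s *\<^sub>R m x0) q \<le> dist (x0 + r *\<^sub>R m x0) q + (r - s)"
    using norm_m[OF \<open>x0 \<in> F\<close>] s by simp
  then have "q \<in> ball (x0 + s *\<^sub>R m x0) s"
    using dq unfolding mem_ball s_def by argo
  then show "q \<in> U"
    using tangent_ball_subset_if_misses[OF \<open>x0 \<in> F\<close> s(1) tangent_ball_misses[OF \<open>x0 \<in> F\<close> s]] by blast
qed

end

section \<open>Boundaries with Lipschitz normal\<close>

locale lipschitz_normal =
  fixes \<Omega> :: "(real^('m::finite option)) set" and r :: real and n
  assumes r_pos: "r > 0" and outward_normal: "outward_normal \<Omega> n"
    and normal_lipschitz: "\<And>x y. x \<in> frontier \<Omega> \<Longrightarrow> y \<in> frontier \<Omega> \<Longrightarrow>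
      norm (n x - n y) \<le> norm (x - y) / r"
begin

lemma normalized_chart_at:
  assumes "x0 \<in> frontier \<Omega>"
  obtains A c \<rho> h \<phi> g where "rigid_motion A" "rigid_motion.T A c x0 = 0" "A *v n x0 = join 0 1"
    "normalized_chart (rigid_motion.T A c ` \<Omega>) r \<rho> h \<phi> g (\<lambda>q. A *v n (rigid_motion.Ti A c q))"
proof -
  obtain \<rho> h A c \<phi> g where chart: "C1_chart \<Omega> x0 \<rho> h A c \<phi> g"
    and normal: "\<And>y. y \<in> ball 0 \<rho> \<Longrightarrow> n (matrix_inv A *v (join y (\<phi> y) - c)) =
      matrix_inv A *v ((1 / sqrt ((norm (g y))\<^sup>2 + 1)) *\<^sub>R join (- g y) 1)"
    using outward_normal assms unfolding outward_normal_def by blast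
  have A: "orthogonal_matrix A" "det A = 1" "A *v x0 + c = 0"
    using chart by (auto simp: C1_chart_def)
  interpret rigid_motion A c by unfold_locales (fact A(1))
  have T: "(\<lambda>x. A *v x + c) = T" by (simp add: fun_eq_iff T_def)
  interpret N: normalized_chart "T ` \<Omega>" r \<rho> h \<phi> g "\<lambda>q. A *v n (Ti q)"
  proof
    show "C1_chart (T ` \<Omega>) 0 \<rho> h (mat 1) 0 \<phi> g"
      unfolding T[symmetric] using C1_chart_normalize[OF A] chart by simp
    show "A *v n (Ti (join y (\<phi> y))) = (1 / sqrt ((norm (g y))\<^sup>2 + 1)) *\<^sub>R join (- g y) 1"
      if "y \<in> ball 0 \<rho>" for y
      using normal[OF that] by (simp add: normal_formula_iff)
    show "norm (A *v n (Ti p) - A *v n (Ti q)) \<le> norm (p - q) / r"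
      if "p \<in> frontier (T ` \<Omega>)" "q \<in> frontier (T ` \<Omega>)" for p q
      using normal_lipschitz[of "Ti p" "Ti q"] that
      by (simp add: frontier_image_T mem_image_T_iff norm_A_diff norm_Ti_diff)
  qed (rule r_pos)
  have "T x0 = 0" using A(3) by (simp add: T_def)
  moreover have "A *v n x0 = join 0 1" using N.normal_zero \<open>T x0 = 0\<close> by (metis Ti_T)
  ultimately show ?thesis
    using rigid_motion_axioms N.normalized_chart_axioms by (rule_tac that) auto
qed

lemma norm_normal:
  assumes "x0 \<in> frontier \<Omega>"
  shows "norm (n x0) = 1"
proof (rule normalized_chart_at[OF assms])
  fix A c \<rho> h \<phi> g assume "rigid_motion A" "rigid_motion.T A c x0 = 0" "A *v n x0 = join 0 1"
  then show ?thesis using rigid_motion.norm_A[of A "n x0"] by simp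
qed

lemma frontier_flat:
  assumes "x0 \<in> frontier \<Omega>" "0 < s" "s < r"
  shows "\<exists>\<delta>>0. \<forall>p\<in>frontier \<Omega>. norm (p - x0) < \<delta> \<longrightarrow> 2 * s * \<bar>(p - x0) \<bullet> n x0\<bar> \<le> (norm (p - x0))\<^sup>2"
proof -
  obtain A c \<rho> h \<phi> g where "rigid_motion A" and T0: "rigid_motion.T A c x0 = 0"
    and An: "A *v n x0 = join 0 1"
    and "normalized_chart (rigid_motion.T A c ` \<Omega>) r \<rho> h \<phi> g (\<lambda>q. A *v n (rigid_motion.Ti A c q))"
    using normalized_chart_at[OF assms(1)] by blast
  interpret rigid_motion A c by fact
  interpret N: normalized_chart "T ` \<Omega>" r \<rho> h \<phi> g "\<lambda>q. A *v n (Ti q)" by fact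
  obtain \<delta> where "\<delta> > 0" and \<delta>: "\<And>p. p \<in> frontier (T ` \<Omega>) \<Longrightarrow> norm p < \<delta> \<Longrightarrow>
      2 * s * \<bar>p \<bullet> (A *v n (Ti 0))\<bar> \<le> (norm p)\<^sup>2"
    using N.frontier_flat_at_zero[OF assms(2,3)] by blast
  have Ti0: "Ti 0 = x0" using T0 by (metis Ti_T)
  have Tp: "T p = A *v (p - x0)" for p using T_diff[of p x0] T0 by simp
  have "2 * s * \<bar>(p - x0) \<bullet> n x0\<bar> \<le> (norm (p - x0))\<^sup>2"
    if "p \<in> frontier \<Omega>" "norm (p - x0) < \<delta>" for p
  proof -
    have "T p \<in> frontier (T ` \<Omega>)" using that(1) by (simp add: frontier_image_T)
    moreover have "norm (T p) < \<delta>" using that(2) by (simp add: Tp)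
    ultimately have "2 * s * \<bar>T p \<bullet> (A *v n (Ti 0))\<bar> \<le> (norm (T p))\<^sup>2" by (rule \<delta>)
    then show ?thesis by (simp add: Tp Ti0)
  qed
  then show ?thesis using \<open>\<delta> > 0\<close> by blast
qed

lemma normal_segment:
  assumes "x0 \<in> frontier \<Omega>"
  shows "\<exists>\<epsilon>>0. \<forall>t. 0 < t \<longrightarrow> t < \<epsilon> \<longrightarrow> x0 - t *\<^sub>R n x0 \<in> \<Omega> \<and> x0 + t *\<^sub>R n x0 \<in> - closure \<Omega>"
proof -
  obtain A c \<rho> h \<phi> g where "rigid_motion A" and T0: "rigid_motion.T A c x0 = 0"
    and An: "A *v n x0 = join 0 1"
    and "normalized_chart (rigid_motion.T A c ` \<Omega>) r \<rho> h \<phi> g (\<lambda>q. A *v n (rigid_motion.Ti A c q))"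
    using normalized_chart_at[OF assms(1)] by blast
  interpret rigid_motion A c by fact
  interpret N: normalized_chart "T ` \<Omega>" r \<rho> h \<phi> g "\<lambda>q. A *v n (Ti q)" by fact
  obtain \<epsilon> where "\<epsilon> > 0" and \<epsilon>: "\<And>t. 0 < t \<Longrightarrow> t < \<epsilon> \<Longrightarrow>
      - t *\<^sub>R (A *v n (Ti 0)) \<in> T ` \<Omega> \<and> t *\<^sub>R (A *v n (Ti 0)) \<in> - closure (T ` \<Omega>)"
    using N.normal_segment_at_zero by blast
  have Ti0: "Ti 0 = x0" using T0 by (metis Ti_T)
  have T_plus: "T (x0 + t *\<^sub>R n x0) = t *\<^sub>R (A *v n x0)" for t by (simp add: T_add_scaleR T0)
  have T_minus: "T (x0 - t *\<^sub>R n x0) = - (t *\<^sub>R (A *v n x0))" for t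
    using T_plus[of "- t"] by simp
  have "x0 - t *\<^sub>R n x0 \<in> \<Omega> \<and> x0 + t *\<^sub>R n x0 \<in> - closure \<Omega>" if "0 < t" "t < \<epsilon>" for t
  proof -
    have "T (x0 - t *\<^sub>R n x0) \<in> T ` \<Omega>" "T (x0 + t *\<^sub>R n x0) \<notin> T ` closure \<Omega>"
      using \<epsilon>[OF that] by (simp_all add: T_plus T_minus Ti0 closure_image_T)
    then show ?thesis by (simp only: T_mem_image_iff) simp
  qed
  then show ?thesis using \<open>\<epsilon> > 0\<close> by blast
qed

lemma tangent_ball_centre:
  assumes "x0 \<in> frontier \<Omega>" "0 < d" "dist x0 a = d"
    and side: "ball a d \<subseteq> \<Omega> \<and> \<sigma> = 1 \<or> ball a d \<subseteq> - closure \<Omega> \<and> \<sigma> = -1"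
  shows "a = x0 + (- \<sigma> * d) *\<^sub>R n x0"
proof -
  obtain A c \<rho> h \<phi> g where "rigid_motion A" and T0: "rigid_motion.T A c x0 = 0"
    and An: "A *v n x0 = join 0 1"
    and "normalized_chart (rigid_motion.T A c ` \<Omega>) r \<rho> h \<phi> g (\<lambda>q. A *v n (rigid_motion.Ti A c q))"
    using normalized_chart_at[OF assms(1)] by blast
  interpret rigid_motion A c by fact
  interpret N: normalized_chart "T ` \<Omega>" r \<rho> h \<phi> g "\<lambda>q. A *v n (Ti q)" by fact
  have Ti0: "Ti 0 = x0" using T0 by (metis Ti_T)
  have "norm (T a) = d" using dist_T[of x0 a] assms(3) T0 by simp
  moreover have "\<sigma> = 1 \<or> \<sigma> = -1" using side by blast
  moreover have "\<sigma> * (vertical q - \<phi> (tangential q)) < 0"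
    if "q \<in> ball (T a) d" "norm (tangential q) < \<rho>" "\<bar>vertical q\<bar> < h" for q
  proof -
    have "Ti q \<in> ball a d" using that(1) by (simp add: image_T_ball[symmetric] mem_image_T_iff)
    then show ?thesis
      using side N.in_cylinder_iff[OF that(2,3)] closure_Un_frontier[of "T ` \<Omega>"]
        closure_subset[of \<Omega>] frontier_subset_closure[of \<Omega>]
      by (auto simp: mem_image_T_iff closure_image_T frontier_image_T)
  qed
  ultimately have "T a = (- \<sigma> * d) *\<^sub>R (A *v n (Ti 0))"
    using N.tangent_ball_centre assms(2) by blast
  also have "\<dots> = T (x0 + (- \<sigma> * d) *\<^sub>R n x0)" by (simp only: T_add_scaleR T0 Ti0) simp
  finally show ?thesis by simp
qed

lemma inner_ball: "x0 \<in> frontier \<Omega> \<Longrightarrow> ball (x0 - r *\<^sub>R n x0) r \<subseteq> \<Omega>"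
proof -
  interpret supporting_normal_field "frontier \<Omega>" \<Omega> r "\<lambda>x. - n x"
  proof
    fix y a d assume "y \<in> frontier \<Omega>" "0 < d" "ball a d \<subseteq> \<Omega>" "dist y a = d"
    then show "a = y + d *\<^sub>R - n y" using tangent_ball_centre[of y d a 1] by simp
  next
    fix x assume "x \<in> frontier \<Omega>"
    then obtain \<epsilon> where "\<epsilon> > 0" "\<forall>t. 0 < t \<longrightarrow> t < \<epsilon> \<longrightarrow> x - t *\<^sub>R n x \<in> \<Omega>"
      using normal_segment by blast
    then show "\<exists>\<epsilon>>0. \<forall>t. 0 < t \<longrightarrow> t < \<epsilon> \<longrightarrow> x + t *\<^sub>R - n x \<in> \<Omega>" by auto
  qed (use r_pos norm_normal normal_lipschitz frontier_flat in \<open>auto simp: norm_minus_commute\<close>)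
  show "x0 \<in> frontier \<Omega> \<Longrightarrow> ?thesis" using tangent_ball_subset by simp
qed

lemma outer_ball: "x0 \<in> frontier \<Omega> \<Longrightarrow> ball (x0 + r *\<^sub>R n x0) r \<subseteq> - closure \<Omega>"
proof -
  have "frontier (- closure \<Omega>) \<subseteq> frontier \<Omega>"
    using frontier_interior_subset[of "- \<Omega>"] by (simp add: closure_interior)
  interpret supporting_normal_field "frontier \<Omega>" "- closure \<Omega>" r n
  proof
    fix y a d assume "y \<in> frontier \<Omega>" "0 < d" "ball a d \<subseteq> - closure \<Omega>" "dist y a = d"
    then show "a = y + d *\<^sub>R n y" using tangent_ball_centre[of y d a "-1"] by simp
  next
    fix x assume "x \<in> frontier \<Omega>"
    then obtain \<epsilon> where "\<epsilon> > 0" "\<forall>t. 0 < t \<longrightarrow> t < \<epsilon> \<longrightarrow> x + t *\<^sub>R n x \<in> - closure \<Omega>"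
      using normal_segment by blast
    then show "\<exists>\<epsilon>>0. \<forall>t. 0 < t \<longrightarrow> t < \<epsilon> \<longrightarrow> x + t *\<^sub>R n x \<in> - closure \<Omega>" by blast
  qed (use r_pos norm_normal normal_lipschitz frontier_flat
      \<open>frontier (- closure \<Omega>) \<subseteq> frontier \<Omega>\<close> in auto)
  show "x0 \<in> frontier \<Omega> \<Longrightarrow> ?thesis" using tangent_ball_subset by simp
qed

end

lemma cond_L_imp_cond_S:
  assumes "r > 0" "cond_L r \<Omega>"
  shows "cond_S r \<Omega>"
proof -
  obtain n where "lipschitz_normal \<Omega> r n"
    using assms unfolding cond_L_def lipschitz_normal_def by (auto simp: field_simps)
  then interpret lipschitz_normal \<Omega> r n .
  show ?thesis
    unfolding cond_S_def
  proof
    fix x0 assume "x0 \<in> frontier \<Omega>"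
    then show "\<exists>a b. ball a r \<subseteq> \<Omega> \<and> ball b r \<subseteq> - closure \<Omega> \<and> dist x0 a = r \<and> dist x0 b = r"
      using inner_ball outer_ball norm_normal r_pos
      by (intro exI[of _ "x0 - r *\<^sub>R n x0"] exI[of _ "x0 + r *\<^sub>R n x0"]) (auto simp: dist_norm)
  qed
qed

theorem theorem1p1:
  fixes \<Omega> :: "(real^('m::finite option)) set" and r :: real
  assumes "open \<Omega>" and "connected \<Omega>" and "r > 0"
  shows "cond_S r \<Omega> \<longleftrightarrow> cond_L r \<Omega>"
  using cond_S_imp_cond_L[OF assms(1,3)] cond_L_imp_cond_S[OF assms(3)] by blast

end
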